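(* Let $F_n$ be free on $f_1,\dots,f_n$, let $0\le k\le n$, and identify $B_k\times B_{n-k}$ with the subgroup of $B_n$ generated by $\sigma_i$ for $i\in\{1,\dots,n-1\}\setminus\{k\}$ via $(\sigma_i,1)\mapsto\sigma_i$, $(1,\sigma_j)\mapsto\sigma_{k+j}$. For $\beta\in B_n$, the following are equivalent: (1) $\beta\in B_k\times B_{n-k}$; (2) the first $k$ entries of $\beta\cdot(f_1,\dots,f_n)$ lie in $\langle f_1,\dots,f_k\rangle$ and the last $n-k$ entries lie in $\langle f_{k+1},\dots,f_n\rangle$.
   Context: The Hurwitz action of $B_n=\langle\sigma_1,\dots,\sigma_{n-1}\rangle$ on $G^n$ is $\sigma_i\cdot(g_1,\dots,g_n)=(g_1,\dots,g_{i-1},g_ig_{i+1}g_i^{-1},g_i,g_{i+2},\dots,g_n)$, $\sigma_i^{-1}\cdot(g_1,\dots,g_n)=(g_1,\dots,g_{i-1},g_{i+1},g_{i+1}^{-1}g_ig_{i+1},g_{i+2},\dots,g_n)$. $B_0$ and $B_1$ are trivial. *)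

theory Defs
  imports Main
begin

(* Letters: (index, inverted?).  (j, False) = generator, (j, True) = its inverse.
   Used both for the free group F_n (generators f_j, j = 1..n) and for braid
   words (generators sigma_i, i = 1..n-1). *)
type_synonym letter = "nat \<times> bool"

fun cancel :: "letter \<Rightarrow> letter list \<Rightarrow> letter list" where
  "cancel x [] = [x]"
| "cancel x (y # ys) = (if fst x = fst y \<and> snd x \<noteq> snd y then ys else x # y # ys)"

definition fred :: "letter list \<Rightarrow> letter list" where
  "fred w = foldr cancel w []"

definition fmul :: "letter list \<Rightarrow> letter list \<Rightarrow> letter list" where
  "fmul a b = fred (a @ b)"

definition finv :: "letter list \<Rightarrow> letter list" where
  "finv a = rev (map (\<lambda>(i, e). (i, \<not> e)) a)"

definition gen_sub :: "nat set \<Rightarrow> letter list set" where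
  "gen_sub S = {fred w | w. \<forall>l \<in> set w. fst l \<in> S}"

definition free_basis :: "nat \<Rightarrow> letter list list" where
  "free_basis n = map (\<lambda>j. [(j, False)]) [1..<n+1]"

definition braid_words :: "nat \<Rightarrow> letter list set" where
  "braid_words n = {w. \<forall>l \<in> set w. 1 \<le> fst l \<and> fst l < n}"

(* congruence on words generated by free cancellation and the braid relations;
   B_n = braid_words n modulo braid_eq n *)
inductive braid_eq :: "nat \<Rightarrow> letter list \<Rightarrow> letter list \<Rightarrow> bool" for n where
  refl: "braid_eq n w w"
| sym: "braid_eq n u v \<Longrightarrow> braid_eq n v u"
| trans: "braid_eq n u v \<Longrightarrow> braid_eq n v w \<Longrightarrow> braid_eq n u w"
| ctxt: "braid_eq n u v \<Longrightarrow> braid_eq n (a @ u @ b) (a @ v @ b)"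
| cancel_rel: "1 \<le> i \<Longrightarrow> i < n \<Longrightarrow> braid_eq n [(i, e), (i, \<not> e)] []"
| far_comm: "1 \<le> i \<Longrightarrow> i < n \<Longrightarrow> 1 \<le> j \<Longrightarrow> j < n \<Longrightarrow> i + 2 \<le> j \<Longrightarrow>
     braid_eq n [(i, False), (j, False)] [(j, False), (i, False)]"
| braid_rel: "1 \<le> i \<Longrightarrow> i + 1 < n \<Longrightarrow>
     braid_eq n [(i, False), (i+1, False), (i, False)] [(i+1, False), (i, False), (i+1, False)]"

definition in_Bk_Bnk :: "nat \<Rightarrow> nat \<Rightarrow> letter list \<Rightarrow> bool" where
  "in_Bk_Bnk n k \<beta> \<longleftrightarrow>
     (\<exists>w \<in> braid_words n. (\<forall>l \<in> set w. fst l \<noteq> k) \<and> braid_eq n \<beta> w)"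

(* ---------- Hurwitz action on F_n^n (tuples as lists, 1-indexed sigma_i
   acting on list positions i-1, i) ---------- *)
fun hur_letter :: "letter \<Rightarrow> letter list list \<Rightarrow> letter list list" where
  "hur_letter (i, False) x =
     x[i - 1 := fmul (fmul (x ! (i - 1)) (x ! i)) (finv (x ! (i - 1))), i := x ! (i - 1)]"
| "hur_letter (i, True) x =
     x[i - 1 := x ! i, i := fmul (fmul (finv (x ! i)) (x ! (i - 1))) (x ! i)]"

fun hurwitz :: "letter list \<Rightarrow> letter list list \<Rightarrow> letter list list" where
  "hurwitz [] x = x"
| "hurwitz (s # w) x = hur_letter s (hurwitz w x)"

end

theory Submission
  imports Defs
begin

(* (1) implies (2): a move sigma_i with i ~= k only combines the two neighbouring entries
   i, i+1, which lie in the same block, so each block keeps its entries in its subgroup.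

   (2) implies (1), by induction on n.  Every braid factors as beta = t U C with t in B_(n-1),
   U a word in the pure braids tau_j = sigma_(n-1)...sigma_(j+1) sigma_j^2 sigma_(j+1)^-1...sigma_(n-1)^-1
   (j < n), which generate a subgroup normalised by B_(n-1), and C = sigma_(n-1)...sigma_q
   a coset representative.  The last entry of beta.f is a conjugate
   of f_q, so an exponent-sum count gives q > k.  After cancelling C, the last entry of
   (t U).f is W f_n W^-1, and killing f_n in W returns the element of F_(n-1) spelled by U
   (tau_j read as f_j).  The block condition therefore forces all letters of the reduced
   form of U to exceed k, so U is equivalent to a word avoiding sigma_k.  Cancelling it as
   well, t.f has block form, t lies in B_k x B_(n-1-k) by induction, and hence so does beta. *)

section \<open>The free group\<close>

definition cancels :: "letter \<Rightarrow> letter \<Rightarrow> bool" where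
  "cancels x y \<longleftrightarrow> fst x = fst y \<and> snd x \<noteq> snd y"

fun reduced :: "letter list \<Rightarrow> bool" where
  "reduced [] = True"
| "reduced [x] = True"
| "reduced (x # y # ys) = (\<not> cancels x y \<and> reduced (y # ys))"

lemma reduced_tl: "reduced (x # ys) \<Longrightarrow> reduced ys"
  by (cases ys) auto

lemma reduced_append:
  "reduced (a @ b) \<longleftrightarrow> reduced a \<and> reduced b \<and> (a = [] \<or> b = [] \<or> \<not> cancels (last a) (hd b))"
proof (induction a rule: reduced.induct)
  case (2 x)
  then show ?case by (cases b) auto
qed auto

lemma cancel_Cons_eq: "cancel x (y # ys) = (if cancels x y then ys else x # y # ys)"
  by (simp add: cancels_def)

declare cancel.simps(2)[simp del]

lemma reduced_cancel: "reduced ys \<Longrightarrow> reduced (cancel x ys)"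
  by (cases ys) (auto simp: cancel_Cons_eq dest: reduced_tl)

lemma reduced_foldr_cancel: "reduced r \<Longrightarrow> reduced (foldr cancel w r)"
  by (induction w) (auto intro: reduced_cancel)

lemma reduced_fred [simp]: "reduced (fred w)"
  unfolding fred_def by (rule reduced_foldr_cancel) simp

lemma fred_reduced: "reduced w \<Longrightarrow> fred w = w"
proof (induction w)
  case Nil
  then show ?case by (simp add: fred_def)
next
  case (Cons x w)
  then have "fred w = w" using reduced_tl by blast
  with Cons.prems show ?case
    by (cases w) (auto simp: fred_def cancel_Cons_eq)
qed

lemma fred_idem [simp]: "fred (fred w) = fred w"
  by (simp add: fred_reduced)

lemma fred_Cons: "fred (x # w) = cancel x (fred w)"
  by (simp add: fred_def)

lemma fred_append: "fred (a @ b) = foldr cancel a (fred b)"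
  by (simp add: fred_def)

lemma cancel_cancel: "reduced r \<Longrightarrow> cancels x y \<Longrightarrow> cancel x (cancel y r) = r"
proof (cases r)
  case (Cons z r')
  assume r: "reduced r" and xy: "cancels x y"
  show ?thesis
  proof (cases "cancels y z")
    case True
    with xy have "z = x" by (cases x, cases z, cases y) (auto simp: cancels_def)
    with r True Cons show ?thesis
      by (cases r') (auto simp: cancel_Cons_eq)
  next
    case False
    with Cons xy show ?thesis by (simp add: cancel_Cons_eq)
  qed
qed (simp add: cancel_Cons_eq)

lemma foldr_cancel_cancel:
  assumes "reduced z" "reduced r"
  shows "foldr cancel (cancel x z) r = cancel x (foldr cancel z r)"
proof (cases z)
  case (Cons y z')
  show ?thesis
  proof (cases "cancels x y")
    case True
    have "reduced (foldr cancel z' r)" using assms by (intro reduced_foldr_cancel)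
    with True Cons show ?thesis by (simp add: cancel_Cons_eq cancel_cancel)
  next
    case False
    with Cons show ?thesis by (simp add: cancel_Cons_eq)
  qed
qed simp

lemma foldr_cancel_fred: "reduced r \<Longrightarrow> foldr cancel (fred a) r = foldr cancel a r"
proof (induction a)
  case (Cons x a)
  have "foldr cancel (fred (x # a)) r = foldr cancel (cancel x (fred a)) r"
    by (simp add: fred_Cons)
  also have "\<dots> = cancel x (foldr cancel (fred a) r)"
    using Cons.prems by (intro foldr_cancel_cancel) auto
  also have "\<dots> = foldr cancel (x # a) r"
    using Cons by simp
  finally show ?case .
qed (simp add: fred_def)

lemma fred_fred_append [simp]: "fred (fred a @ b) = fred (a @ b)"
  by (simp add: fred_append foldr_cancel_fred)

lemma fred_append_fred [simp]: "fred (a @ fred b) = fred (a @ b)"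
  by (simp add: fred_append)

lemma finv_Nil [simp]: "finv [] = []"
  by (simp add: finv_def)

lemma finv_Cons: "finv (x # w) = finv w @ [(fst x, \<not> snd x)]"
  by (cases x) (simp add: finv_def)

lemma finv_append: "finv (a @ b) = finv b @ finv a"
  by (simp add: finv_def)

lemma finv_finv [simp]: "finv (finv a) = a"
  by (induction a) (auto simp: finv_def)

lemma fst_set_finv: "fst ` set (finv w) = fst ` set w"
  by (simp add: finv_def image_image case_prod_beta)

lemma fred_finv_append_self: "fred (finv w @ w) = []"
proof (induction w)
  case (Cons x w)
  have "fred (finv (x # w) @ x # w) =
      foldr cancel (finv w) (cancel (fst x, \<not> snd x) (cancel x (fred w)))"
    by (simp add: finv_Cons fred_append fred_Cons)
  also have "\<dots> = foldr cancel (finv w) (fred w)"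
    by (subst cancel_cancel) (auto simp: cancels_def)
  also have "\<dots> = []"
    using Cons by (simp add: fred_append)
  finally show ?case .
qed (simp add: fred_def)

lemma set_cancel: "set (cancel x r) \<subseteq> insert x (set r)"
  by (cases r) (auto simp: cancel_Cons_eq)

lemma set_fred: "set (fred w) \<subseteq> set w"
proof -
  have "set (foldr cancel w r) \<subseteq> set w \<union> set r" for r
    by (induction w) (use set_cancel in fastforce)+
  from this[of "[]"] show ?thesis by (simp add: fred_def)
qed

lemma reduced_finv: "reduced w \<Longrightarrow> reduced (finv w)"
proof (induction w)
  case (Cons x w)
  have "reduced w" using Cons.prems reduced_tl by blast
  show ?case
  proof (cases w)
    case Nil
    then show ?thesis by (simp add: finv_def)
  next
    case (Cons y w')
    have "last (finv w) = (fst y, \<not> snd y)" using Cons by (simp add: finv_Cons)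
    moreover have "\<not> cancels x y" using Cons.prems Cons by simp
    ultimately show ?thesis using Cons.IH \<open>reduced w\<close> Cons
      by (simp only: finv_Cons reduced_append) (auto simp: cancels_def)
  qed
qed simp

typedef free_group = "{w. reduced w}" morphisms word_of Abs_free_group
  by (rule exI[of _ "[]"]) simp

lemma reduced_word_of [simp]: "reduced (word_of g)"
  using word_of by simp

lemma word_of_Abs_free_group [simp]: "reduced w \<Longrightarrow> word_of (Abs_free_group w) = w"
  by (simp add: Abs_free_group_inverse)

(* The free group is written additively, as a (noncommutative) group_add. *)
instantiation free_group :: group_add
begin

definition "0 = Abs_free_group []"
definition "a + b = Abs_free_group (fred (word_of a @ word_of b))"
definition "- a = Abs_free_group (fred (finv (word_of a)))"
definition "a - b = a + - (b::free_group)"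

instance
proof
  fix a b c :: free_group
  show "a + b + c = a + (b + c)"
    by (simp add: plus_free_group_def)
  show "0 + a = a" "a + 0 = a"
    by (simp_all add: plus_free_group_def zero_free_group_def fred_reduced word_of_inverse)
  show "- a + a = 0"
    by (simp add: plus_free_group_def zero_free_group_def uminus_free_group_def fred_finv_append_self)
  show "a + - b = a - b"
    by (simp add: minus_free_group_def)
qed

end

lemma word_of_plus: "word_of (a + b) = fred (word_of a @ word_of b)"
  by (simp add: plus_free_group_def)

lemma word_of_uminus: "word_of (- a) = finv (word_of a)"
  by (simp add: uminus_free_group_def fred_reduced reduced_finv)

lemma word_of_zero [simp]: "word_of 0 = []"
  by (simp add: zero_free_group_def)

lemma word_of_diff: "word_of (a - b) = fred (word_of a @ finv (word_of b))"
  by (simp only: diff_conv_add_uminus word_of_plus word_of_uminus)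

definition gen :: "nat \<Rightarrow> free_group" where
  "gen j = Abs_free_group [(j, False)]"

lemma word_of_gen [simp]: "word_of (gen j) = [(j, False)]"
  by (simp add: gen_def)

definition support :: "free_group \<Rightarrow> nat set" where
  "support g = fst ` set (word_of g)"

lemma support_zero [simp]: "support 0 = {}"
  by (simp add: support_def)

lemma support_add: "support (a + b) \<subseteq> support a \<union> support b"
  using set_fred[of "word_of a @ word_of b"] by (auto simp: support_def word_of_plus)

lemma support_uminus [simp]: "support (- a) = support a"
  by (simp add: support_def word_of_uminus fst_set_finv)

lemma support_diff: "support (a - b) \<subseteq> support a \<union> support b"
  using support_add[of a "- b"] by (simp only: diff_conv_add_uminus support_uminus)

lemma support_gen [simp]: "support (gen j) = {j}"
  by (simp add: support_def)

lemma support_sum_list: "support (sum_list xs) \<subseteq> (\<Union>x\<in>set xs. support x)"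
proof (induction xs)
  case (Cons x xs)
  then show ?case using support_add[of x "sum_list xs"] by auto
qed simp

section \<open>Substitution endomorphisms\<close>

definition subst_letter :: "free_group list \<Rightarrow> letter \<Rightarrow> free_group" where
  "subst_letter y l = (if snd l then - (y ! (fst l - 1)) else y ! (fst l - 1))"

definition subst_word :: "free_group list \<Rightarrow> letter list \<Rightarrow> free_group" where
  "subst_word y w = sum_list (map (subst_letter y) w)"

definition subst :: "free_group list \<Rightarrow> free_group \<Rightarrow> free_group" where
  "subst y g = subst_word y (word_of g)"

lemma subst_word_Nil [simp]: "subst_word y [] = 0"
  by (simp add: subst_word_def)

lemma subst_word_Cons [simp]: "subst_word y (x # w) = subst_letter y x + subst_word y w"
  by (simp add: subst_word_def)

lemma subst_word_append [simp]: "subst_word y (a @ b) = subst_word y a + subst_word y b"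
  by (induction a) (auto simp: add.assoc)

lemma subst_word_cancel: "subst_word y (cancel x r) = subst_letter y x + subst_word y r"
proof (cases r)
  case (Cons z r')
  show ?thesis
  proof (cases "cancels x z")
    case True
    then have "subst_letter y z = - subst_letter y x"
      by (auto simp: cancels_def subst_letter_def)
    with True Cons show ?thesis by (simp add: cancel_Cons_eq add.assoc[symmetric])
  next
    case False
    with Cons show ?thesis by (simp add: cancel_Cons_eq)
  qed
qed simp

lemma subst_word_fred [simp]: "subst_word y (fred w) = subst_word y w"
proof (induction w)
  case (Cons x w)
  then show ?case by (simp add: fred_Cons subst_word_cancel)
qed (simp add: fred_def)

lemma subst_word_finv [simp]: "subst_word y (finv w) = - subst_word y w"
proof -
  have sum_rev: "sum_list (rev (map uminus xs)) = - sum_list xs" for xs :: "free_group list"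
    by (induction xs) (auto simp: minus_add)
  have "map (subst_letter y) (finv w) = rev (map uminus (map (subst_letter y) w))"
    by (simp add: finv_def rev_map subst_letter_def case_prod_beta)
  then show ?thesis
    unfolding subst_word_def by (simp only: sum_rev)
qed

lemma subst_add [simp]: "subst y (a + b) = subst y a + subst y b"
  by (simp add: subst_def word_of_plus)

lemma subst_uminus [simp]: "subst y (- a) = - subst y a"
  by (simp add: subst_def word_of_uminus)

lemma subst_zero [simp]: "subst y 0 = 0"
  by (simp add: subst_def)

lemma subst_diff [simp]: "subst y (a - b) = subst y a - subst y b"
  by (simp only: diff_conv_add_uminus subst_add subst_uminus)

lemma subst_gen [simp]: "subst y (gen j) = y ! (j - 1)"
  by (simp add: subst_def subst_letter_def)

lemma subst_subst:
  assumes "support g \<subseteq> {1..length y}"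
  shows "subst z (subst y g) = subst (map (subst z) y) g"
proof -
  have "subst z (subst_word y w) = subst_word (map (subst z) y) w"
    if "\<forall>l\<in>set w. 1 \<le> fst l \<and> fst l \<le> length y" for w
    using that by (induction w) (auto simp: subst_letter_def)
  moreover have "\<forall>l\<in>set (word_of g). 1 \<le> fst l \<and> fst l \<le> length y"
    using assms by (auto simp: support_def)
  ultimately show ?thesis
    by (simp add: subst_def[of y] subst_def[of "map (subst z) y"])
qed

lemma support_subst: "support (subst y g) \<subseteq> (\<Union>i\<in>support g. support (y ! (i - 1)))"
proof -
  have "support (subst y g) \<subseteq> (\<Union>x\<in>set (map (subst_letter y) (word_of g)). support x)"
    unfolding subst_def subst_word_def by (rule support_sum_list)
  also have "\<dots> \<subseteq> (\<Union>i\<in>support g. support (y ! (i - 1)))"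
  proof (rule UN_least)
    fix x assume "x \<in> set (map (subst_letter y) (word_of g))"
    then obtain l where "l \<in> set (word_of g)" "x = subst_letter y l" by auto
    moreover have "support (subst_letter y l) = support (y ! (fst l - 1))"
      by (simp add: subst_letter_def)
    ultimately show "support x \<subseteq> (\<Union>i\<in>support g. support (y ! (i - 1)))"
      by (auto simp: support_def[of g])
  qed
  finally show ?thesis .
qed

section \<open>The Hurwitz action on tuples of group elements\<close>

fun hur_step :: "letter \<Rightarrow> free_group list \<Rightarrow> free_group list" where
  "hur_step (i, False) x = x[i - 1 := x ! (i - 1) + x ! i + - (x ! (i - 1)), i := x ! (i - 1)]"
| "hur_step (i, True) x = x[i - 1 := x ! i, i := - (x ! i) + x ! (i - 1) + x ! i]"

definition hur :: "letter list \<Rightarrow> free_group list \<Rightarrow> free_group list" where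
  "hur w x = foldr hur_step w x"

lemma hur_Nil [simp]: "hur [] x = x"
  by (simp add: hur_def)

lemma hur_Cons [simp]: "hur (s # w) x = hur_step s (hur w x)"
  by (simp add: hur_def)

lemma hur_append: "hur (a @ b) x = hur a (hur b x)"
  by (simp add: hur_def)

lemma length_hur_step [simp]: "length (hur_step s x) = length x"
  by (cases s, cases "snd s") simp_all

lemma length_hur [simp]: "length (hur w x) = length x"
  by (induction w) auto

lemma braid_words_Nil [simp]: "[] \<in> braid_words n"
  by (simp add: braid_words_def)

lemma braid_words_Cons [simp]: "x # w \<in> braid_words n \<longleftrightarrow> 1 \<le> fst x \<and> fst x < n \<and> w \<in> braid_words n"
  by (auto simp: braid_words_def)

lemma braid_words_append [simp]: "a @ b \<in> braid_words n \<longleftrightarrow> a \<in> braid_words n \<and> b \<in> braid_words n"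
  by (auto simp: braid_words_def)

lemma hurwitz_word_of:
  "w \<in> braid_words (length x) \<Longrightarrow> hurwitz w (map word_of x) = map word_of (hur w x)"
proof (induction w)
  case (Cons s w)
  obtain i e where s: "s = (i, e)" by (cases s)
  with Cons.prems have "1 \<le> i" "i < length x" "w \<in> braid_words (length x)"
    by (auto simp: braid_words_def)
  with Cons.IH s show ?case
    by (cases e) (simp_all add: map_update fmul_def word_of_plus word_of_uminus word_of_diff)
qed simp

definition basis :: "nat \<Rightarrow> free_group list" where
  "basis n = map gen [1..<n+1]"

lemma length_basis [simp]: "length (basis n) = n"
  by (simp add: basis_def)

lemma basis_nth [simp]: "j < n \<Longrightarrow> basis n ! j = gen (Suc j)"
  by (simp add: basis_def del: upt_Suc)

lemma basis_Suc: "basis (Suc m) = basis m @ [gen (Suc m)]"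
  by (simp add: basis_def)

lemma free_basis_eq: "free_basis n = map word_of (basis n)"
  by (simp add: free_basis_def basis_def)

lemma map_subst_basis: "length y = n \<Longrightarrow> map (subst y) (basis n) = y"
  by (auto intro!: nth_equalityI)

lemma hur_map_subst:
  "w \<in> braid_words (length x) \<Longrightarrow> hur w (map (subst y) x) = map (subst y) (hur w x)"
proof (induction w)
  case (Cons s w)
  obtain i e where s: "s = (i, e)" by (cases s)
  with Cons.prems have "1 \<le> i" "i < length x" "w \<in> braid_words (length x)"
    by (auto simp: braid_words_def)
  with Cons.IH s show ?case
    by (cases e) (simp_all add: map_update)
qed simp

lemma hur_eq_map_subst:
  "w \<in> braid_words n \<Longrightarrow> length y = n \<Longrightarrow> hur w y = map (subst y) (hur w (basis n))"
  using hur_map_subst[of w "basis n" y] map_subst_basis[of y n] by simp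

lemmas group_add_normalize = add.assoc diff_conv_add_uminus minus_add add_minus_cancel minus_add_cancel

lemma hur_step_inverse:
  assumes "1 \<le> i" "i < length x"
  shows "hur_step (i, e) (hur_step (i, \<not> e) x) = x"
  using assms by (cases e)
    (auto intro!: nth_equalityI simp: nth_list_update group_add_normalize simp del: add_uminus_conv_diff)

lemma hur_step_far_commute:
  assumes "1 \<le> i" "i + 2 \<le> j" "j < length x"
  shows "hur_step (i, False) (hur_step (j, False) x) = hur_step (j, False) (hur_step (i, False) x)"
  using assms by (auto intro!: nth_equalityI simp: nth_list_update)

lemma hur_step_braid:
  assumes "1 \<le> i" "i + 1 < length x"
  shows "hur_step (i, False) (hur_step (i + 1, False) (hur_step (i, False) x)) =
    hur_step (i + 1, False) (hur_step (i, False) (hur_step (i + 1, False) x))"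
  using assms
  by (auto intro!: nth_equalityI simp: nth_list_update group_add_normalize simp del: add_uminus_conv_diff)

(* The contexts in braid_eq may contain letters outside 1..n-1, on which hur_step is junk;
   so the invariance is proved for the subwords of valid letters. *)
definition valid_part :: "nat \<Rightarrow> letter list \<Rightarrow> letter list" where
  "valid_part n w = filter (\<lambda>l. 1 \<le> fst l \<and> fst l < n) w"

lemma hur_valid_part_braid_eq:
  "braid_eq n u v \<Longrightarrow> length x = n \<Longrightarrow> hur (valid_part n u) x = hur (valid_part n v) x"
proof (induction arbitrary: x rule: braid_eq.induct)
  case (ctxt u v a b)
  then have "hur (valid_part n u) (hur (valid_part n b) x) = hur (valid_part n v) (hur (valid_part n b) x)"
    by simp
  then show ?case
    unfolding valid_part_def filter_append hur_append by simp
next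
  case (cancel_rel i e)
  then show ?case using hur_step_inverse[of i x e] by (simp add: valid_part_def)
next
  case (far_comm i j)
  then show ?case using hur_step_far_commute[of i j x] by (simp add: valid_part_def)
next
  case (braid_rel i)
  then show ?case using hur_step_braid[of i x] by (simp add: valid_part_def)
qed simp_all

lemma hur_braid_eq:
  assumes "braid_eq n u v" "u \<in> braid_words n" "v \<in> braid_words n" "length x = n"
  shows "hur u x = hur v x"
proof -
  have "valid_part n w = w" if "w \<in> braid_words n" for w
    using that by (auto simp: valid_part_def braid_words_def)
  with hur_valid_part_braid_eq[OF assms(1,4)] assms(2,3) show ?thesis by simp
qed

text \<open>\<open>desc a b\<close> is the braid \<open>\<sigma>\<^bsub>b-1\<^esub> \<cdots> \<sigma>\<^bsub>a\<^esub>\<close>, which carries entry \<open>a - 1\<close> to the end.\<close>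

definition desc :: "nat \<Rightarrow> nat \<Rightarrow> letter list" where
  "desc a b = map (\<lambda>i. (i, False)) (rev [a..<b])"

definition desc_inv :: "nat \<Rightarrow> nat \<Rightarrow> letter list" where
  "desc_inv a b = map (\<lambda>i. (i, True)) [a..<b]"

lemma finv_desc: "finv (desc a b) = desc_inv a b"
  by (simp add: finv_def desc_def desc_inv_def rev_map)

lemma finv_desc_inv: "finv (desc_inv a b) = desc a b"
  by (metis finv_desc finv_finv)

lemma desc_same [simp]: "desc a a = []"
  by (simp add: desc_def)

lemma desc_inv_same [simp]: "desc_inv a a = []"
  by (simp add: desc_inv_def)

lemma desc_step: "p < n \<Longrightarrow> desc p n = desc (Suc p) n @ [(p, False)]"
  by (simp add: desc_def upt_conv_Cons)

lemma desc_inv_step: "p < n \<Longrightarrow> desc_inv p n = (p, True) # desc_inv (Suc p) n"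
  by (simp add: desc_inv_def upt_conv_Cons)

lemma set_desc: "l \<in> set (desc a b) \<Longrightarrow> a \<le> fst l \<and> fst l < b \<and> \<not> snd l"
  by (auto simp: desc_def)

lemma set_desc_inv: "l \<in> set (desc_inv a b) \<Longrightarrow> a \<le> fst l \<and> fst l < b \<and> snd l"
  by (auto simp: desc_inv_def)

lemma desc_valid: "1 \<le> p \<Longrightarrow> desc p n \<in> braid_words n"
  by (auto simp: braid_words_def dest: set_desc)

lemma desc_inv_valid: "1 \<le> p \<Longrightarrow> desc_inv p n \<in> braid_words n"
  by (auto simp: braid_words_def dest: set_desc_inv)

lemma hur_desc_last:
  "1 \<le> p \<Longrightarrow> p \<le> n \<Longrightarrow> length y = n \<Longrightarrow> hur (desc p n) y ! (n - 1) = y ! (p - 1)"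
proof (induction "n - p" arbitrary: p y)
  case (Suc m)
  then have "p < n" by simp
  then have "hur (desc p n) y = hur (desc (Suc p) n) (hur_step (p, False) y)"
    by (simp add: desc_step hur_append)
  also have "\<dots> ! (n - 1) = hur_step (p, False) y ! (Suc p - 1)"
    using Suc by (intro Suc.hyps) auto
  also have "\<dots> = y ! (p - 1)"
    using Suc.prems \<open>p < n\<close> by (simp add: nth_list_update)
  finally show ?case .
qed simp

lemma hur_desc_inv_nth:
  assumes "1 \<le> p" "p \<le> n" "length y = n"
  shows "hur (desc_inv p n) y ! (p - 1) = y ! (n - 1)"
    and "i < p - 1 \<Longrightarrow> hur (desc_inv p n) y ! i = y ! i"
proof -
  have "hur (desc_inv p n) y ! (p - 1) = y ! (n - 1) \<and> (\<forall>i < p - 1. hur (desc_inv p n) y ! i = y ! i)"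
    using assms
  proof (induction "n - p" arbitrary: p)
    case (Suc m)
    then have "p < n" by simp
    let ?z = "hur (desc_inv (Suc p) n) y"
    have "?z ! (Suc p - 1) = y ! (n - 1) \<and> (\<forall>i < Suc p - 1. ?z ! i = y ! i)"
      using Suc by (intro Suc.hyps) auto
    moreover have "hur (desc_inv p n) y = hur_step (p, True) ?z"
      using \<open>p < n\<close> by (simp add: desc_inv_step)
    ultimately show ?case
      using \<open>p < n\<close> Suc.prems by (auto simp: nth_list_update)
  qed simp
  then show "hur (desc_inv p n) y ! (p - 1) = y ! (n - 1)" "i < p - 1 \<Longrightarrow> hur (desc_inv p n) y ! i = y ! i"
    by auto
qed

lemma hur_desc_inv_move_zero:
  "length A = p - 1 \<Longrightarrow> 1 \<le> p \<Longrightarrow> length (A @ B @ [0]) = n \<Longrightarrow>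
    hur (desc_inv p n) (A @ B @ [0]) = A @ [0] @ B"
proof (induction B arbitrary: A p)
  case (Cons b B)
  then have "p < n" by simp
  have "hur (desc_inv (Suc p) n) ((A @ [b]) @ B @ [0]) = (A @ [b]) @ [0] @ B"
    using Cons by (intro Cons.IH) auto
  with \<open>p < n\<close> have "hur (desc_inv p n) (A @ (b # B) @ [0]) = hur_step (p, True) (A @ [b, 0] @ B)"
    by (simp add: desc_inv_step)
  also have "\<dots> = A @ [0, b] @ B"
    using Cons.prems by (auto intro!: nth_equalityI simp: nth_list_update nth_append)
  finally show ?case by simp
qed simp

lemma hur_desc_move_zero:
  "length A = p - 1 \<Longrightarrow> 1 \<le> p \<Longrightarrow> length (A @ [0] @ B) = n \<Longrightarrow>
    hur (desc p n) (A @ [0] @ B) = A @ B @ [0]"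
proof (induction B arbitrary: A p)
  case (Cons b B)
  then have "p < n" by simp
  have "hur_step (p, False) (A @ [0] @ b # B) = (A @ [b]) @ [0] @ B"
    using Cons.prems by (auto intro!: nth_equalityI simp: nth_list_update nth_append)
  with \<open>p < n\<close> have "hur (desc p n) (A @ [0] @ b # B) = hur (desc (Suc p) n) ((A @ [b]) @ [0] @ B)"
    by (simp add: desc_step hur_append)
  also have "\<dots> = (A @ [b]) @ B @ [0]"
    using Cons by (intro Cons.IH) auto
  finally show ?case by simp
qed simp

section \<open>The pure braids \<open>\<tau>\<close>\<close>

text \<open>\<open>tau n j False = \<sigma>\<^bsub>n-1\<^esub> \<cdots> \<sigma>\<^bsub>j+1\<^esub> \<sigma>\<^bsub>j\<^esub>\<^sup>2 \<sigma>\<^bsub>j+1\<^esub>\<^sup>-\<^sup>1 \<cdots> \<sigma>\<^bsub>n-1\<^esub>\<^sup>-\<^sup>1\<close>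
  is the pure braid \<open>A\<^bsub>j,n\<^esub>\<close> linking strands \<open>j\<close> and \<open>n\<close>; \<open>tau n j True\<close> is its inverse.\<close>

definition tau :: "nat \<Rightarrow> nat \<Rightarrow> bool \<Rightarrow> letter list" where
  "tau n j d = desc (Suc j) n @ [(j, d), (j, d)] @ desc_inv (Suc j) n"

lemma tau_valid: "1 \<le> j \<Longrightarrow> j < n \<Longrightarrow> tau n j d \<in> braid_words n"
  by (auto simp: tau_def braid_words_def dest: set_desc set_desc_inv)

text \<open>Conjugating by \<open>desc\<close> brings the trivial last entry next to entry \<open>j - 1\<close>, and
  \<open>\<sigma>\<^sub>j\<^sup>\<plusminus>\<^sup>2\<close> fixes a pair whose second entry is trivial.\<close>

lemma hur_tau_last_zero:
  assumes "1 \<le> j" "j < n" "length y = n" "y ! (n - 1) = 0"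
  shows "hur (tau n j d) y = y"
proof -
  obtain A a B where y: "y = A @ [a] @ B @ [0]" and lA: "length A = j - 1"
  proof
    let ?y' = "take (n - 1) y"
    have "y = ?y' @ [0]"
      using take_Suc_conv_app_nth[of "n - 1" y] assms by simp
    moreover have "?y' = take (j - 1) ?y' @ ?y' ! (j - 1) # drop j ?y'"
      using id_take_nth_drop[of "j - 1" ?y'] assms by simp
    ultimately show "y = take (j - 1) ?y' @ [?y' ! (j - 1)] @ drop j ?y' @ [0]"
      by (metis append.assoc append_Cons append_Nil)
  qed (use assms in simp)
  have "hur (desc_inv (Suc j) n) y = (A @ [a]) @ [0] @ B"
    using hur_desc_inv_move_zero[of "A @ [a]" "Suc j" B n] y lA assms by simp
  moreover have "hur_step (j, d) (hur_step (j, d) (A @ [a, 0] @ B)) = A @ [a, 0] @ B"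
    using lA assms(1) by (cases d) (auto intro!: nth_equalityI simp: nth_list_update nth_append)
  ultimately have "hur (tau n j d) y = hur (desc (Suc j) n) ((A @ [a]) @ [0] @ B)"
    by (simp add: tau_def hur_append)
  also have "\<dots> = y"
    using lA assms y by (subst hur_desc_move_zero) auto
  finally show ?thesis .
qed

lemma hur_tau_basis_last:
  fixes d :: bool
  assumes "1 \<le> j" "j < n"
  defines "w \<equiv> if d then - gen n - gen j else gen j"
  shows "hur (tau n j d) (basis n) ! (n - 1) = w + gen n - w"
proof -
  let ?z = "hur (desc_inv (Suc j) n) (basis n)"
  have z: "?z ! j = gen n" "?z ! (j - 1) = gen j"
    using hur_desc_inv_nth[of "Suc j" n "basis n"] assms by auto
  let ?u = "hur_step (j, d) (hur_step (j, d) ?z)"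
  have "hur (tau n j d) (basis n) ! (n - 1) = hur (desc (Suc j) n) ?u ! (n - 1)"
    by (simp add: tau_def hur_append)
  also have "\<dots> = ?u ! j"
    using assms by (subst hur_desc_last) auto
  also have "\<dots> = w + gen n - w"
    using z assms unfolding w_def
    by (cases d) (auto simp: nth_list_update group_add_normalize simp del: add_uminus_conv_diff)
  finally show ?thesis .
qed

definition block :: "nat \<Rightarrow> nat \<Rightarrow> nat \<Rightarrow> nat set" where
  "block n k j = (if j < k then {1..k} else {k+1..n})"

definition block_form :: "nat \<Rightarrow> nat \<Rightarrow> free_group list \<Rightarrow> bool" where
  "block_form n k x \<longleftrightarrow> (\<forall>j < n. support (x ! j) \<subseteq> block n k j)"

lemma block_form_basis: "k \<le> n \<Longrightarrow> block_form n k (basis n)"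
  by (auto simp: block_form_def block_def)

lemma block_form_update:
  assumes "block_form n k x" "length x = n" "support v \<subseteq> block n k p"
  shows "block_form n k (x[p := v])"
  unfolding block_form_def
proof (intro allI impI)
  fix j assume "j < n"
  with assms show "support (x[p := v] ! j) \<subseteq> block n k j"
    by (cases "j = p") (auto simp: block_form_def)
qed

lemma support_conj: "support (a + b - a) \<subseteq> support a \<union> support b"
  using support_diff[of "a + b" a] support_add[of a b] by blast

lemma support_conj_inv: "support (- a + b + a) \<subseteq> support a \<union> support b"
  using support_add[of "- a + b" a] support_add[of "- a" b] by auto

lemma block_form_hur_step:
  assumes "block_form n k x" "length x = n" "1 \<le> i" "i < n" "i \<noteq> k"
  shows "block_form n k (hur_step (i, e) x)"
proof -
  let ?B = "block n k i"
  have same: "block n k (i - 1) = ?B"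
    using assms by (auto simp: block_def)
  have "support (x ! (i - 1)) \<subseteq> ?B" "support (x ! i) \<subseteq> ?B"
    using assms same unfolding block_form_def by (metis less_imp_diff_less)+
  then have "support (x ! (i - 1) + x ! i - x ! (i - 1)) \<subseteq> ?B"
    and "support (- (x ! i) + x ! (i - 1) + x ! i) \<subseteq> ?B"
    using support_conj[of "x ! (i - 1)" "x ! i"] support_conj_inv[of "x ! i" "x ! (i - 1)"] by auto
  with assms same \<open>support (x ! (i - 1)) \<subseteq> ?B\<close> \<open>support (x ! i) \<subseteq> ?B\<close> show ?thesis
    by (cases e) (auto intro!: block_form_update)
qed

lemma block_form_hur:
  assumes "block_form n k x" "length x = n" "w \<in> braid_words n" "\<forall>l\<in>set w. fst l \<noteq> k"
  shows "block_form n k (hur w x)"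
  using assms(3,4)
proof (induction w)
  case (Cons s w)
  then show ?case
    using assms(1,2) by (cases s) (auto simp: braid_words_def intro!: block_form_hur_step)
qed (use assms in simp)

lemma support_hur_basis:
  assumes "w \<in> braid_words n" "j < n"
  shows "support (hur w (basis n) ! j) \<subseteq> {1..n}"
proof -
  have "block_form n 0 (hur w (basis n))"
    using assms(1) by (intro block_form_hur block_form_basis) (auto simp: braid_words_def)
  with assms(2) show ?thesis by (simp add: block_form_def block_def)
qed

lemma block_form_map_subst:
  assumes "block_form n k y" "length y = n" "block_form n k x" "length x = n" "k \<le> n"
  shows "block_form n k (map (subst y) x)"
  unfolding block_form_def
proof (intro allI impI)
  fix j assume "j < n"
  have "support (y ! (i - 1)) \<subseteq> block n k j" if "i \<in> support (x ! j)" for i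
  proof -
    have "i \<in> block n k j"
      using that assms(3) \<open>j < n\<close> by (auto simp: block_form_def)
    then have "i - 1 < n" "block n k (i - 1) = block n k j"
      using assms(5) by (auto simp: block_def split: if_splits)
    with assms(1) show ?thesis
      unfolding block_form_def by metis
  qed
  then have "support (subst y (x ! j)) \<subseteq> block n k j"
    using support_subst[of y "x ! j"] by blast
  with \<open>j < n\<close> assms(4) show "support (map (subst y) x ! j) \<subseteq> block n k j"
    by simp
qed

lemma block_form_if_in_Bk_Bnk:
  assumes "in_Bk_Bnk n k \<beta>" "k \<le> n" "\<beta> \<in> braid_words n"
  shows "block_form n k (hur \<beta> (basis n))"
proof -
  obtain w where w: "w \<in> braid_words n" "\<forall>l\<in>set w. fst l \<noteq> k" "braid_eq n \<beta> w"
    using assms(1) unfolding in_Bk_Bnk_def by blast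
  have "hur \<beta> (basis n) = hur w (basis n)"
    using hur_braid_eq[OF w(3) assms(3) w(1)] by simp
  moreover have "block_form n k (hur w (basis n))"
    using block_form_hur[OF block_form_basis[OF assms(2)] _ w(1,2)] by simp
  ultimately show ?thesis by simp
qed

definition exp_sum_word :: "nat \<Rightarrow> letter list \<Rightarrow> int" where
  "exp_sum_word q w = sum_list (map (\<lambda>l. if fst l = q then (if snd l then -1 else 1) else 0) w)"

definition exp_sum :: "nat \<Rightarrow> free_group \<Rightarrow> int" where
  "exp_sum q g = exp_sum_word q (word_of g)"

lemma exp_sum_word_append: "exp_sum_word q (a @ b) = exp_sum_word q a + exp_sum_word q b"
  by (simp add: exp_sum_word_def)

lemma exp_sum_word_cancel: "exp_sum_word q (cancel x r) = exp_sum_word q (x # r)"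
  by (cases r) (auto simp: cancel_Cons_eq exp_sum_word_def cancels_def)

lemma exp_sum_word_fred: "exp_sum_word q (fred w) = exp_sum_word q w"
proof (induction w)
  case (Cons x w)
  then show ?case
    by (metis append_Cons append_Nil exp_sum_word_append exp_sum_word_cancel fred_Cons)
qed (simp add: fred_def)

lemma exp_sum_word_finv: "exp_sum_word q (finv w) = - exp_sum_word q w"
  by (induction w) (auto simp: finv_Cons exp_sum_word_append exp_sum_word_def)

lemma exp_sum_add: "exp_sum q (a + b) = exp_sum q a + exp_sum q b"
  by (simp add: exp_sum_def word_of_plus exp_sum_word_fred exp_sum_word_append)

lemma exp_sum_uminus: "exp_sum q (- a) = - exp_sum q a"
  by (simp add: exp_sum_def word_of_uminus exp_sum_word_finv)

lemma exp_sum_diff: "exp_sum q (a - b) = exp_sum q a - exp_sum q b"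
  by (simp only: diff_conv_add_uminus exp_sum_add exp_sum_uminus)

lemma exp_sum_gen: "exp_sum q (gen q) = 1"
  by (simp add: exp_sum_def exp_sum_word_def)

lemma exp_sum_notin_support:
  assumes "q \<notin> support g"
  shows "exp_sum q g = 0"
proof -
  have "q \<notin> fst ` set w \<Longrightarrow> exp_sum_word q w = 0" for w
    by (induction w) (auto simp: exp_sum_word_def)
  with assms show ?thesis
    by (simp add: exp_sum_def support_def)
qed

lemma gen_in_support_conj: "q \<in> support (w + gen q - w)"
proof (rule ccontr)
  assume "q \<notin> support (w + gen q - w)"
  then have "exp_sum q (w + gen q - w) = 0"
    by (rule exp_sum_notin_support)
  moreover have "exp_sum q (w + gen q - w) = 1"
    by (simp add: exp_sum_diff exp_sum_add exp_sum_gen)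
  ultimately show False by simp
qed

lemma word_of_subst_word_basis:
  "\<forall>l\<in>set u. 1 \<le> fst l \<and> fst l \<le> n \<Longrightarrow> word_of (subst_word (basis n) u) = fred u"
proof (induction u)
  case (Cons x u)
  then have "word_of (subst_letter (basis n) x) = [x]"
    by (cases x) (auto simp: subst_letter_def word_of_uminus finv_def)
  with Cons have "word_of (subst_word (basis n) (x # u)) = fred ([x] @ fred u)"
    by (simp add: word_of_plus)
  then show ?case by (simp add: fred_Cons)
qed (simp add: fred_def)

definition killed_basis :: "nat \<Rightarrow> free_group list" where
  "killed_basis n = (basis n)[n - 1 := 0]"

lemma length_killed_basis [simp]: "length (killed_basis n) = n"
  by (simp add: killed_basis_def)

lemma killed_basis_nth: "i < n \<Longrightarrow> killed_basis n ! i = (if i = n - 1 then 0 else gen (Suc i))"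
  by (simp add: killed_basis_def nth_list_update)

lemma commute_gen_Abs_power:
  "reduced T \<Longrightarrow> \<forall>l\<in>set T. fst l = n \<Longrightarrow> Abs_free_group T + gen n = gen n + Abs_free_group T"
proof (induction T)
  case Nil
  then show ?case by (simp add: zero_free_group_def[symmetric])
next
  case (Cons x T)
  have "reduced T" using Cons.prems reduced_tl by blast
  with Cons have IH: "Abs_free_group T + gen n = gen n + Abs_free_group T" by simp
  have "word_of (Abs_free_group [x] + Abs_free_group T) = x # T"
    using Cons.prems \<open>reduced T\<close> by (simp add: word_of_plus fred_reduced)
  then have split: "Abs_free_group (x # T) = Abs_free_group [x] + Abs_free_group T"
    by (metis word_of_inverse)
  have "Abs_free_group [x] = (if snd x then - gen n else gen n)"
    using Cons.prems
    by (cases x) (auto intro!: word_of_inject[THEN iffD1] simp: word_of_uminus finv_def gen_def)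
  then have x: "Abs_free_group [x] + gen n = gen n + Abs_free_group [x]"
    by simp
  have "Abs_free_group (x # T) + gen n = Abs_free_group [x] + (Abs_free_group T + gen n)"
    by (simp add: split add.assoc)
  also have "\<dots> = (Abs_free_group [x] + gen n) + Abs_free_group T"
    by (simp only: IH add.assoc)
  also have "\<dots> = gen n + Abs_free_group (x # T)"
    by (simp only: x split add.assoc)
  finally show ?case .
qed

lemma word_of_conj_gen:
  assumes "reduced R" "R \<noteq> [] \<Longrightarrow> fst (last R) \<noteq> n"
  shows "word_of (Abs_free_group R + gen n - Abs_free_group R) = R @ [(n, False)] @ finv R"
proof -
  have r1: "reduced (R @ [(n, False)])"
    using assms by (cases "R = []") (auto simp: reduced_append cancels_def)
  have "reduced ((R @ [(n, False)]) @ finv R)"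
  proof (cases "R = []")
    case False
    then have "hd (finv R) = (fst (last R), \<not> snd (last R))"
      by (simp add: finv_def hd_rev last_map case_prod_beta)
    with False assms(2) r1 reduced_finv[OF assms(1)] show ?thesis
      by (simp only: reduced_append) (simp add: cancels_def finv_def)
  qed (use r1 in simp)
  with assms(1) r1 show ?thesis
    by (simp add: word_of_diff word_of_plus fred_reduced)
qed

lemma split_trailing_letters:
  fixes w :: "letter list" and n :: nat
  obtains R T where "w = R @ T" "R \<noteq> [] \<Longrightarrow> fst (last R) \<noteq> n" "\<forall>l\<in>set T. fst l = n"
proof
  let ?P = "\<lambda>l::letter. fst l = n"
  show "w = rev (dropWhile ?P (rev w)) @ rev (takeWhile ?P (rev w))"
    by (metis rev_append rev_rev_ident takeWhile_dropWhile_id)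
  show "fst (last (rev (dropWhile ?P (rev w)))) \<noteq> n" if "rev (dropWhile ?P (rev w)) \<noteq> []"
    using that hd_dropWhile[of ?P "rev w"] by (simp add: last_rev)
  show "\<forall>l\<in>set (rev (takeWhile ?P (rev w))). fst l = n"
    by (auto dest: set_takeWhileD)
qed

text \<open>Killing \<open>f\<^sub>n\<close> in \<open>W\<close> only deletes letters of \<open>W f\<^sub>n W\<^sup>-\<^sup>1\<close>: after stripping the
  trailing \<open>f\<^sub>n\<close>-power from \<open>W\<close>, the conjugate is freely reduced as written.\<close>

lemma support_subst_killed_basis:
  assumes W: "support W \<subseteq> {1..n}" and n: "1 \<le> n"
  shows "support (subst (killed_basis n) W) \<subseteq> support (W + gen n - W)"
proof -
  obtain R T where RT: "word_of W = R @ T" and last_R: "R \<noteq> [] \<Longrightarrow> fst (last R) \<noteq> n"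
    and T_n: "\<forall>l\<in>set T. fst l = n"
    using split_trailing_letters[of "word_of W" n] by metis
  then have "reduced R" "reduced T"
    using reduced_word_of[of W] by (simp_all add: reduced_append)
  have "word_of (Abs_free_group R + Abs_free_group T) = word_of W"
    using RT \<open>reduced R\<close> \<open>reduced T\<close> reduced_word_of[of W] by (simp add: word_of_plus fred_reduced)
  then have W_split: "W = Abs_free_group R + Abs_free_group T"
    by (simp add: word_of_inject)
  have "W + gen n - W = Abs_free_group R + (Abs_free_group T + gen n - Abs_free_group T) - Abs_free_group R"
    by (simp add: W_split group_add_normalize del: add_uminus_conv_diff)
  also have "Abs_free_group T + gen n - Abs_free_group T = gen n"
    by (simp only: commute_gen_Abs_power[OF \<open>reduced T\<close> T_n] add_diff_cancel)
  finally have "fst ` set R \<subseteq> support (W + gen n - W)"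
    using word_of_conj_gen[OF \<open>reduced R\<close> last_R] by (auto simp: support_def)
  moreover have "subst_word (killed_basis n) T = 0"
    using T_n n by (induction T) (auto simp: subst_letter_def killed_basis_nth)
  then have "subst (killed_basis n) W = subst (killed_basis n) (Abs_free_group R)"
    using \<open>reduced T\<close> by (simp add: W_split subst_def[of _ "Abs_free_group T"])
  moreover have "support (killed_basis n ! (i - 1)) \<subseteq> {i}" if "i \<in> fst ` set R" for i
  proof -
    have "i \<in> {1..n}" using that W RT by (auto simp: support_def)
    then show ?thesis by (auto simp: killed_basis_nth support_def split: if_splits)
  qed
  ultimately show ?thesis
    using support_subst[of "killed_basis n" "Abs_free_group R"] \<open>reduced R\<close>
    by (fastforce simp: support_def[of "Abs_free_group R"])
qed

definition tau_word :: "nat \<Rightarrow> letter list \<Rightarrow> letter list" where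
  "tau_word n u = concat (map (\<lambda>l. tau n (fst l) (snd l)) u)"

lemma tau_word_Nil [simp]: "tau_word n [] = []"
  by (simp add: tau_word_def)

lemma tau_word_Cons: "tau_word n (l # u) = tau n (fst l) (snd l) @ tau_word n u"
  by (simp add: tau_word_def)

lemma tau_word_append: "tau_word n (a @ b) = tau_word n a @ tau_word n b"
  by (simp add: tau_word_def)

lemma tau_word_valid: "u \<in> braid_words n \<Longrightarrow> tau_word n u \<in> braid_words n"
  by (induction u) (auto simp: tau_word_Cons tau_valid)

lemma hur_tau_word_killed_basis: "u \<in> braid_words n \<Longrightarrow> hur (tau_word n u) (killed_basis n) = killed_basis n"
  by (induction u) (auto simp: tau_word_Cons hur_append braid_words_def killed_basis_nth intro!: hur_tau_last_zero)

lemma subst_killed_basis_hur_tau_word: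
  assumes "u \<in> braid_words n"
  shows "map (subst (killed_basis n)) (hur (tau_word n u) (basis n)) = killed_basis n"
  using hur_eq_map_subst[OF tau_word_valid[OF assms], of "killed_basis n"]
    hur_tau_word_killed_basis[OF assms] by simp

lemma hur_tau_word_basis_last:
  assumes "1 \<le> n" "u \<in> braid_words n"
  shows "\<exists>W. support W \<subseteq> {1..n} \<and> hur (tau_word n u) (basis n) ! (n - 1) = W + gen n - W \<and>
    subst (killed_basis n) W = subst_word (basis n) u"
  using assms(2)
proof (induction u)
  case Nil
  show ?case using assms(1) by (intro exI[of _ 0]) auto
next
  case (Cons l u)
  obtain j d where l: "l = (j, d)" by (cases l)
  have j: "1 \<le> j" "j < n" and u: "u \<in> braid_words n"
    using Cons.prems l by (auto simp: braid_words_def)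
  from Cons.IH[OF u] obtain W0 where W0: "support W0 \<subseteq> {1..n}"
    "hur (tau_word n u) (basis n) ! (n - 1) = W0 + gen n - W0"
    "subst (killed_basis n) W0 = subst_word (basis n) u" by blast
  define x where "x = hur (tau_word n u) (basis n)"
  define w where "w = (if d then - gen n - gen j else gen j)"
  define W where "W = subst x w + W0"
  have "length x = n" by (simp add: x_def)
  have w: "support w \<subseteq> {1..n}"
    using j support_diff[of "- gen n" "gen j"] by (auto simp: w_def)
  have "hur (tau_word n (l # u)) (basis n) = map (subst x) (hur (tau n j d) (basis n))"
    using hur_eq_map_subst[OF tau_valid[OF j] \<open>length x = n\<close>] by (simp add: l tau_word_Cons hur_append x_def)
  also have "\<dots> ! (n - 1) = subst x w + x ! (n - 1) - subst x w"
    using hur_tau_basis_last[OF j, of d] assms(1) by (simp add: w_def)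
  also have "\<dots> = W + gen n - W"
    using W0(2) by (simp add: W_def x_def group_add_normalize del: add_uminus_conv_diff)
  finally have last: "hur (tau_word n (l # u)) (basis n) ! (n - 1) = W + gen n - W" .
  have "support (x ! (i - 1)) \<subseteq> {1..n}" if "i \<in> support w" for i
  proof -
    have "i - 1 < n" using subsetD[OF w that] by auto
    then show ?thesis using support_hur_basis[OF tau_word_valid[OF u]] by (simp add: x_def)
  qed
  then have "support (subst x w) \<subseteq> {1..n}"
    using support_subst[of x w] by blast
  with W0(1) have supp: "support W \<subseteq> {1..n}"
    using support_add[of "subst x w" W0] by (auto simp: W_def)
  have "subst (killed_basis n) W = subst (map (subst (killed_basis n)) x) w + subst (killed_basis n) W0"
    using w \<open>length x = n\<close> by (simp add: W_def subst_subst)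
  also have "\<dots> = subst_word (basis n) (l # u)"
    using subst_killed_basis_hur_tau_word[OF u] W0(3) j
    by (cases d) (auto simp: x_def w_def killed_basis_nth subst_letter_def l)
  finally show ?case
    using last supp by blast
qed

lemma braid_eq_refl [simp]: "braid_eq n w w"
  by (rule braid_eq.refl)

declare braid_eq.trans [trans]

lemma braid_eq_append: "braid_eq n u u' \<Longrightarrow> braid_eq n v v' \<Longrightarrow> braid_eq n (u @ v) (u' @ v')"
  using braid_eq.ctxt[of n u u' "[]" v] braid_eq.ctxt[of n v v' u' "[]"] braid_eq.trans by fastforce

lemma braid_words_finv [simp]: "finv w \<in> braid_words n \<longleftrightarrow> w \<in> braid_words n"
  by (auto simp: braid_words_def finv_def)

lemma braid_eq_append_finv: "w \<in> braid_words n \<Longrightarrow> braid_eq n (w @ finv w) []"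
proof (induction w)
  case (Cons x w)
  obtain i e where x: "x = (i, e)" by (cases x)
  with Cons.prems have i: "1 \<le> i" "i < n" and "w \<in> braid_words n" by auto
  have "braid_eq n ([x] @ (w @ finv w) @ [(i, \<not> e)]) ([x] @ [] @ [(i, \<not> e)])"
    using Cons.IH[OF \<open>w \<in> braid_words n\<close>] by (rule braid_eq.ctxt)
  also have "braid_eq n ([x] @ [] @ [(i, \<not> e)]) []"
    using braid_eq.cancel_rel[OF i, of e] x by simp
  finally show ?case by (simp add: finv_Cons x)
qed simp

lemma braid_eq_finv_append: "w \<in> braid_words n \<Longrightarrow> braid_eq n (finv w @ w) []"
  using braid_eq_append_finv[of "finv w" n] by simp

lemma braid_eq_finv:
  assumes "braid_eq n u v" "u \<in> braid_words n" "v \<in> braid_words n"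
  shows "braid_eq n (finv u) (finv v)"
proof -
  have "braid_eq n (finv u) (finv u @ v @ finv v)"
    using braid_eq.ctxt[OF braid_eq.sym[OF braid_eq_append_finv[OF assms(3)]], of "finv u" "[]"] by simp
  also have "braid_eq n (finv u @ v @ finv v) (finv u @ u @ finv v)"
    using braid_eq.ctxt[OF braid_eq.sym[OF assms(1)]] .
  also have "braid_eq n (finv u @ u @ finv v) (finv v)"
    using braid_eq.ctxt[OF braid_eq_finv_append[OF assms(2)], of "[]" "finv v"] by simp
  finally show ?thesis .
qed

lemma braid_eq_cancel_letter_rev: "1 \<le> i \<Longrightarrow> i < n \<Longrightarrow> braid_eq n [(i, \<not> e), (i, e)] []"
  using braid_eq.cancel_rel[of i n "\<not> e"] by simp

lemma braid_eq_conj_letter_finv: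
  assumes "braid_eq n (X @ [(i, e)]) ([(i, e)] @ Y)" "X \<in> braid_words n" "Y \<in> braid_words n"
    "1 \<le> i" "i < n"
  shows "braid_eq n (finv X @ [(i, e)]) ([(i, e)] @ finv Y)"
proof -
  have inv: "braid_eq n ([(i, \<not> e)] @ finv X) (finv Y @ [(i, \<not> e)])"
    using braid_eq_finv[OF assms(1)] assms by (simp add: finv_append finv_Cons)
  have "braid_eq n (finv X @ [(i, e)]) ([(i, e), (i, \<not> e)] @ finv X @ [(i, e)])"
    using braid_eq.ctxt[OF braid_eq.sym[OF braid_eq.cancel_rel[OF assms(4,5), of e]], of "[]" "finv X @ [(i, e)]"]
    by simp
  also have "braid_eq n \<dots> ([(i, e)] @ finv Y @ [(i, \<not> e), (i, e)])"
    using braid_eq.ctxt[OF inv, of "[(i, e)]" "[(i, e)]"] by simp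
  also have "braid_eq n \<dots> ([(i, e)] @ finv Y)"
    using braid_eq.ctxt[OF braid_eq_cancel_letter_rev[OF assms(4,5), of e], of "[(i, e)] @ finv Y" "[]"] by simp
  finally show ?thesis .
qed

lemma braid_eq_conj_letter_swap_finv:
  assumes "braid_eq n (X @ [s]) ([s'] @ X)" "X \<in> braid_words n"
  shows "braid_eq n (finv X @ [s']) ([s] @ finv X)"
proof -
  have "braid_eq n (finv X @ [s']) (finv X @ [s'] @ X @ finv X)"
    using braid_eq.ctxt[OF braid_eq.sym[OF braid_eq_append_finv[OF assms(2)]], of "finv X @ [s']" "[]"]
    by simp
  also have "braid_eq n \<dots> (finv X @ X @ [s] @ finv X)"
    using braid_eq.ctxt[OF braid_eq.sym[OF assms(1)], of "finv X" "finv X"] by simp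
  also have "braid_eq n \<dots> ([s] @ finv X)"
    using braid_eq.ctxt[OF braid_eq_finv_append[OF assms(2)], of "[]" "[s] @ finv X"] by simp
  finally show ?thesis .
qed

lemma braid_eq_conj_inv_letter:
  assumes "braid_eq n (X @ [(i, e)]) ([(i, e)] @ Y)" "1 \<le> i" "i < n"
  shows "braid_eq n ([(i, \<not> e)] @ X) (Y @ [(i, \<not> e)])"
proof -
  have "braid_eq n ([(i, \<not> e)] @ X) ([(i, \<not> e)] @ X @ [(i, e), (i, \<not> e)])"
    using braid_eq.ctxt[OF braid_eq.sym[OF braid_eq.cancel_rel[OF assms(2,3), of e]], of "[(i, \<not> e)] @ X" "[]"]
    by simp
  also have "braid_eq n \<dots> ([(i, \<not> e), (i, e)] @ Y @ [(i, \<not> e)])"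
    using braid_eq.ctxt[OF assms(1), of "[(i, \<not> e)]" "[(i, \<not> e)]"] by simp
  also have "braid_eq n \<dots> (Y @ [(i, \<not> e)])"
    using braid_eq.ctxt[OF braid_eq_cancel_letter_rev[OF assms(2,3), of e], of "[]" "Y @ [(i, \<not> e)]"] by simp
  finally show ?thesis .
qed

definition far :: "nat \<Rightarrow> nat \<Rightarrow> bool" where
  "far i j \<longleftrightarrow> i + 2 \<le> j \<or> j + 2 \<le> i"

lemma braid_eq_far_commute:
  assumes "1 \<le> i" "i < n" "1 \<le> j" "j < n" "far i j"
  shows "braid_eq n [(i, e), (j, e')] [(j, e'), (i, e)]"
proof -
  have pos: "braid_eq n [(i, False), (j, False)] [(j, False), (i, False)]"
    if "1 \<le> i" "i < n" "1 \<le> j" "j < n" "far i j" for i j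
    using that unfolding far_def by (auto intro: braid_eq.far_comm braid_eq.sym[OF braid_eq.far_comm])
  have flip: "braid_eq n [(i, \<not> e), b] [b, (i, \<not> e)]"
    if "braid_eq n [(i, e), b] [b, (i, e)]" "1 \<le> i" "i < n" for i e b
    using braid_eq_conj_inv_letter[of n "[b]" i e "[b]"] braid_eq.sym[OF that(1)] that(2,3) by simp
  have "braid_eq n [(i, e), (j, False)] [(j, False), (i, e)]"
    using pos[OF assms] flip[of i False "(j, False)"] assms by (cases e) auto
  then have "braid_eq n [(j, e'), (i, e)] [(i, e), (j, e')]"
    using flip[of j False "(i, e)"] assms by (cases e') (auto intro: braid_eq.sym)
  then show ?thesis by (rule braid_eq.sym)
qed

lemma braid_eq_commute_far_word:
  assumes "w \<in> braid_words n" "1 \<le> i" "i < n" "\<forall>l\<in>set w. far (fst l) i"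
  shows "braid_eq n (w @ [(i, e)]) ([(i, e)] @ w)"
  using assms
proof (induction w)
  case (Cons x w)
  then have "braid_eq n (w @ [(i, e)]) ([(i, e)] @ w)"
    by simp
  moreover have "braid_eq n [x, (i, e)] [(i, e), x]"
    using Cons.prems by (cases x) (auto intro: braid_eq_far_commute simp: far_def)
  ultimately show ?case
    using braid_eq.ctxt[of n "w @ [(i, e)]" "[(i, e)] @ w" "[x]" "[]"]
      braid_eq.ctxt[of n "[x, (i, e)]" "[(i, e), x]" "[]" w] braid_eq.trans
    by fastforce
qed simp

lemma braid_eq_mono: "braid_eq m u v \<Longrightarrow> m \<le> n \<Longrightarrow> braid_eq n u v"
proof (induction rule: braid_eq.induct)
  case (braid_rel i)
  then show ?case by (intro braid_eq.braid_rel) auto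
qed (auto intro: braid_eq.sym braid_eq.trans braid_eq.ctxt braid_eq.cancel_rel braid_eq.far_comm)

lemma braid_words_mono: "w \<in> braid_words m \<Longrightarrow> m \<le> n \<Longrightarrow> w \<in> braid_words n"
  by (auto simp: braid_words_def)

lemma desc_split: "a \<le> b \<Longrightarrow> b \<le> c \<Longrightarrow> desc a c = desc b c @ desc a b"
proof -
  assume "a \<le> b" "b \<le> c"
  then have "[a..<c] = [a..<b] @ [b..<c]"
    by (metis le_Suc_ex upt_add_eq_append)
  then show ?thesis by (simp add: desc_def)
qed

lemma desc_conj_letter_pos:
  assumes "1 \<le> q" "q < i" "i < n"
  shows "braid_eq n (desc q n @ [(i, False)]) ([(i - 1, False)] @ desc q n)"
proof -
  define D1 where "D1 = desc (i + 1) n"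
  define D2 where "D2 = desc q (i - 1)"
  have "desc q n = desc (i - 1) n @ D2"
    using assms by (simp add: D2_def desc_split)
  also have "desc (i - 1) n = D1 @ [(i, False), (i - 1, False)]"
    using assms desc_split[of "i - 1" "i + 1" n] by (simp add: D1_def desc_def upt_rec)
  finally have split: "desc q n = D1 @ [(i, False), (i - 1, False)] @ D2"
    by simp
  have c2: "braid_eq n (D2 @ [(i, False)]) ([(i, False)] @ D2)"
    using assms by (intro braid_eq_commute_far_word) (auto simp: D2_def far_def braid_words_def dest: set_desc)
  have c1: "braid_eq n (D1 @ [(i - 1, False)]) ([(i - 1, False)] @ D1)"
    using assms by (intro braid_eq_commute_far_word) (auto simp: D1_def far_def braid_words_def dest: set_desc)
  have br: "braid_eq n [(i, False), (i - 1, False), (i, False)] [(i - 1, False), (i, False), (i - 1, False)]"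
    using braid_eq.braid_rel[of "i - 1" n] assms by (auto intro: braid_eq.sym)
  have "braid_eq n (desc q n @ [(i, False)]) (D1 @ [(i, False), (i - 1, False), (i, False)] @ D2)"
    using braid_eq.ctxt[OF c2, of "D1 @ [(i, False), (i - 1, False)]" "[]"] by (simp add: split)
  also have "braid_eq n \<dots> (D1 @ [(i - 1, False), (i, False), (i - 1, False)] @ D2)"
    using braid_eq.ctxt[OF br, of D1 D2] by simp
  also have "braid_eq n \<dots> ([(i - 1, False)] @ desc q n)"
    using braid_eq.ctxt[OF c1, of "[]" "[(i, False), (i - 1, False)] @ D2"] by (simp add: split)
  finally show ?thesis .
qed

lemma desc_conj_letter:
  assumes "1 \<le> q" "q < i" "i < n"
  shows "braid_eq n (desc q n @ [(i, e)]) ([(i - 1, e)] @ desc q n)"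
proof (cases e)
  case True
  have D: "desc q n \<in> braid_words n"
    using assms by (intro desc_valid) auto
  have "braid_eq n (finv (desc q n) @ [(i - 1, False)]) ([(i, False)] @ finv (desc q n))"
    using braid_eq_conj_letter_swap_finv[OF desc_conj_letter_pos[OF assms] D] .
  then have "braid_eq n ([(i - 1, True)] @ desc q n) (desc q n @ [(i, True)])"
    using braid_eq_finv D assms by (fastforce simp: finv_append finv_Cons)
  with True show ?thesis by (simp add: braid_eq.sym)
qed (use desc_conj_letter_pos[OF assms] in simp)

lemma desc_append_prev_inv:
  assumes "1 \<le> p" "p < n"
  shows "braid_eq n (desc (Suc p) n @ [(p, True)]) (tau n p True @ desc p n)"
proof -
  let ?D = "desc (Suc p) n"
  have D: "?D \<in> braid_words n"
    by (simp add: desc_valid)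
  have "tau n p True @ desc p n = ?D @ [(p, True), (p, True)] @ (finv ?D @ ?D) @ [(p, False)]"
    using assms by (simp add: tau_def finv_desc desc_step)
  also have "braid_eq n \<dots> (?D @ [(p, True), (p, True), (p, False)])"
    using braid_eq.ctxt[OF braid_eq_finv_append[OF D], of "?D @ [(p, True), (p, True)]" "[(p, False)]"]
    by simp
  also have "braid_eq n \<dots> (?D @ [(p, True)])"
    using braid_eq.ctxt[OF braid_eq_cancel_letter_rev[OF assms, of False], of "?D @ [(p, True)]" "[]"] by simp
  finally show ?thesis by (rule braid_eq.sym)
qed

lemma desc_append_letter:
  assumes "1 \<le> q" "q < n"
  shows "braid_eq n (desc q n @ [(q, False)]) (tau n q False @ desc (q + 1) n)"
proof -
  let ?D = "desc (Suc q) n"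
  have D: "?D \<in> braid_words n"
    by (simp add: desc_valid)
  have "tau n q False @ desc (q + 1) n = ?D @ [(q, False), (q, False)] @ (finv ?D @ ?D)"
    by (simp add: tau_def finv_desc)
  also have "braid_eq n \<dots> (?D @ [(q, False), (q, False)])"
    using braid_eq.ctxt[OF braid_eq_finv_append[OF D], of "?D @ [(q, False), (q, False)]" "[]"]
    by simp
  also have "\<dots> = desc q n @ [(q, False)]"
    using assms by (simp add: desc_step)
  finally show ?thesis by (rule braid_eq.sym)
qed

lemma desc_append_letter_inv:
  assumes "1 \<le> q" "q < n"
  shows "braid_eq n (desc q n @ [(q, True)]) (desc (q + 1) n)"
  using braid_eq.ctxt[OF braid_eq.cancel_rel[OF assms, of False], of "desc (q + 1) n" "[]"] assms
  by (simp add: desc_step)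

lemma finv_tau: "finv (tau n j d) = tau n j (\<not> d)"
  by (simp add: tau_def finv_append finv_desc finv_desc_inv finv_Cons)

lemma finv_tau_word: "finv (tau_word n u) = tau_word n (finv u)"
  by (induction u) (auto simp: tau_word_Cons tau_word_append finv_append finv_tau finv_Cons)

lemma tau_unfold:
  "1 \<le> j \<Longrightarrow> j + 1 < n \<Longrightarrow>
    tau n j d = desc (j + 2) n @ [(j + 1, False), (j, d), (j, d), (j + 1, True)] @ desc_inv (j + 2) n"
  by (simp add: tau_def desc_step desc_inv_step)

lemma tau_commute_letter:
  assumes "1 \<le> j" "j < n" "1 \<le> i" "i + 1 < n" "i + 2 \<le> j \<or> j + 1 \<le> i"
  shows "braid_eq n (tau n j d @ [(i, e)]) ([(i, e)] @ tau n j d)"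
  using assms(5)
proof
  assume "i + 2 \<le> j"
  with assms show ?thesis
    by (intro braid_eq_commute_far_word tau_valid)
      (auto simp: tau_def far_def dest!: set_desc set_desc_inv)
next
  assume "j + 1 \<le> i"
  define D where "D = desc (Suc j) n"
  have tau: "tau n j d = D @ [(j, d), (j, d)] @ finv D"
    by (simp add: tau_def D_def finv_desc)
  have c3: "braid_eq n (D @ [(i + 1, e)]) ([(i, e)] @ D)"
    using desc_conj_letter[of "Suc j" "i + 1" n e] assms \<open>j + 1 \<le> i\<close> by (simp add: D_def)
  have c1: "braid_eq n (finv D @ [(i, e)]) ([(i + 1, e)] @ finv D)"
    using braid_eq_conj_letter_swap_finv[OF c3] by (simp add: D_def desc_valid)
  have c2: "braid_eq n ([(j, d), (j, d)] @ [(i + 1, e)]) ([(i + 1, e)] @ [(j, d), (j, d)])"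
    using assms \<open>j + 1 \<le> i\<close> by (intro braid_eq_commute_far_word) (auto simp: far_def)
  have "braid_eq n (tau n j d @ [(i, e)]) (D @ [(j, d), (j, d)] @ [(i + 1, e)] @ finv D)"
    using braid_eq.ctxt[OF c1, of "D @ [(j, d), (j, d)]" "[]"] by (simp add: tau)
  also have "braid_eq n \<dots> (D @ [(i + 1, e)] @ [(j, d), (j, d)] @ finv D)"
    using braid_eq.ctxt[OF c2, of D "finv D"] by simp
  also have "braid_eq n \<dots> ([(i, e)] @ tau n j d)"
    using braid_eq.ctxt[OF c3, of "[]" "[(j, d), (j, d)] @ finv D"] by (simp add: tau)
  finally show ?thesis .
qed

lemma braid_eq_square_conj:
  assumes "1 \<le> j" "j + 1 < n"
  shows "braid_eq n [(j + 1, False), (j + 1, False), (j, False)]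
    [(j, False), (j + 1, False), (j, False), (j, False), (j + 1, True)]"
proof -
  have br: "braid_eq n [(j, False), (j + 1, False), (j, False)] [(j + 1, False), (j, False), (j + 1, False)]"
    using braid_eq.braid_rel[of j n] assms by simp
  have "braid_eq n [(j, False), (j + 1, False), (j, False), (j, False), (j + 1, True)]
      [(j + 1, False), (j, False), (j + 1, False), (j, False), (j + 1, True)]"
    using braid_eq.ctxt[OF br, of "[]" "[(j, False), (j + 1, True)]"] by simp
  also have "braid_eq n \<dots> [(j + 1, False), (j + 1, False), (j, False), (j + 1, False), (j + 1, True)]"
    using braid_eq.ctxt[OF br, of "[(j + 1, False)]" "[(j + 1, True)]"] by simp
  also have "braid_eq n \<dots> [(j + 1, False), (j + 1, False), (j, False)]"
    using braid_eq.ctxt[OF braid_eq.cancel_rel[of "j + 1" n False], of "[(j + 1, False), (j + 1, False), (j, False)]" "[]"]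
      assms by simp
  finally show ?thesis by (rule braid_eq.sym)
qed

lemma tau_succ_conj_letter:
  assumes "1 \<le> j" "j + 1 < n"
  shows "braid_eq n (tau n (j + 1) False @ [(j, False)]) ([(j, False)] @ tau n j False)"
proof -
  define D where "D = desc (j + 2) n"
  define Di where "Di = desc_inv (j + 2) n"
  have c1: "braid_eq n (Di @ [(j, False)]) ([(j, False)] @ Di)"
    using assms by (intro braid_eq_commute_far_word)
      (auto simp: Di_def far_def desc_inv_valid dest!: set_desc_inv)
  have c2: "braid_eq n (D @ [(j, False)]) ([(j, False)] @ D)"
    using assms by (intro braid_eq_commute_far_word) (auto simp: D_def far_def desc_valid dest!: set_desc)
  have "braid_eq n (tau n (j + 1) False @ [(j, False)]) (D @ [(j + 1, False), (j + 1, False), (j, False)] @ Di)"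
    using braid_eq.ctxt[OF c1, of "D @ [(j + 1, False), (j + 1, False)]" "[]"]
    by (simp add: tau_def D_def Di_def)
  also have "braid_eq n \<dots>
      (D @ [(j, False), (j + 1, False), (j, False), (j, False), (j + 1, True)] @ Di)"
    using braid_eq.ctxt[OF braid_eq_square_conj[OF assms], of D Di] .
  also have "braid_eq n \<dots> ([(j, False)] @ tau n j False)"
    using braid_eq.ctxt[OF c2, of "[]" "[(j + 1, False), (j, False), (j, False), (j + 1, True)] @ Di"]
      assms by (simp add: tau_unfold D_def Di_def)
  finally show ?thesis .
qed

lemma braid_eq_band_commute:
  assumes "1 \<le> j" "j + 1 < n"
  shows "braid_eq n ([(j + 1, False), (j, False), (j, False), (j + 1, False)] @ [(j, False)])
    ([(j, False)] @ [(j + 1, False), (j, False), (j, False), (j + 1, False)])"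
proof -
  have br: "braid_eq n [(j, False), (j + 1, False), (j, False)] [(j + 1, False), (j, False), (j + 1, False)]"
    using braid_eq.braid_rel[of j n] assms by simp
  have "braid_eq n ([(j + 1, False), (j, False), (j, False), (j + 1, False)] @ [(j, False)])
      [(j + 1, False), (j, False), (j + 1, False), (j, False), (j + 1, False)]"
    using braid_eq.ctxt[OF br, of "[(j + 1, False), (j, False)]" "[]"] by simp
  also have "braid_eq n \<dots> ([(j, False)] @ [(j + 1, False), (j, False), (j, False), (j + 1, False)])"
    using braid_eq.ctxt[OF braid_eq.sym[OF br], of "[]" "[(j, False), (j + 1, False)]"] by simp
  finally show ?thesis .
qed

lemma tau_pair_eq:
  assumes "1 \<le> j" "j + 1 < n"
  shows "braid_eq n (tau n j False @ tau n (j + 1) False)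
    (desc (j + 2) n @ [(j + 1, False), (j, False), (j, False), (j + 1, False)] @ finv (desc (j + 2) n))"
proof -
  define D where "D = desc (j + 2) n"
  have "tau n j False @ tau n (j + 1) False = D @ [(j + 1, False), (j, False), (j, False), (j + 1, True)] @
      (finv D @ D) @ [(j + 1, False), (j + 1, False)] @ finv D"
    using tau_unfold[OF assms] by (simp add: tau_def D_def finv_desc)
  also have "braid_eq n \<dots>
      (D @ [(j + 1, False), (j, False), (j, False)] @ [(j + 1, True), (j + 1, False)] @ [(j + 1, False)] @ finv D)"
    using braid_eq.ctxt[OF braid_eq_finv_append[of D n],
        of "D @ [(j + 1, False), (j, False), (j, False), (j + 1, True)]" "[(j + 1, False), (j + 1, False)] @ finv D"]
    by (simp add: D_def desc_valid)
  also have "braid_eq n \<dots> (D @ [(j + 1, False), (j, False), (j, False), (j + 1, False)] @ finv D)"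
    using braid_eq.ctxt[OF braid_eq_cancel_letter_rev[of "j + 1" n False],
        of "D @ [(j + 1, False), (j, False), (j, False)]" "[(j + 1, False)] @ finv D"] assms
    by simp
  finally show ?thesis
    by (simp add: D_def)
qed

lemma tau_pair_commute_letter:
  assumes "1 \<le> j" "j + 1 < n"
  shows "braid_eq n ((tau n j False @ tau n (j + 1) False) @ [(j, False)])
    ([(j, False)] @ (tau n j False @ tau n (j + 1) False))"
proof -
  define D where "D = desc (j + 2) n"
  define M where "M = [(j + 1, False), (j, False), (j, False), (j + 1, False)]"
  have X: "braid_eq n (tau n j False @ tau n (j + 1) False) (D @ M @ finv D)"
    using tau_pair_eq[OF assms] by (simp add: D_def M_def)
  have c1: "braid_eq n (finv D @ [(j, False)]) ([(j, False)] @ finv D)"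
    using assms by (intro braid_eq_commute_far_word)
      (auto simp: D_def finv_desc far_def desc_inv_valid dest!: set_desc_inv)
  have c2: "braid_eq n (D @ [(j, False)]) ([(j, False)] @ D)"
    using assms by (intro braid_eq_commute_far_word) (auto simp: D_def far_def desc_valid dest!: set_desc)
  have "braid_eq n ((tau n j False @ tau n (j + 1) False) @ [(j, False)]) ((D @ M @ finv D) @ [(j, False)])"
    using braid_eq_append[OF X braid_eq_refl] .
  also have "braid_eq n \<dots> (D @ M @ [(j, False)] @ finv D)"
    using braid_eq.ctxt[OF c1, of "D @ M" "[]"] by simp
  also have "braid_eq n \<dots> (D @ [(j, False)] @ M @ finv D)"
    using braid_eq.ctxt[OF braid_eq_band_commute[OF assms], of D "finv D"] by (simp add: M_def)
  also have "braid_eq n \<dots> ([(j, False)] @ (D @ M @ finv D))"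
    using braid_eq.ctxt[OF c2, of "[]" "M @ finv D"] by simp
  also have "braid_eq n \<dots> ([(j, False)] @ (tau n j False @ tau n (j + 1) False))"
    using braid_eq_append[OF braid_eq_refl braid_eq.sym[OF X]] .
  finally show ?thesis .
qed

lemma tau_conj_letter_same:
  assumes "1 \<le> j" "j + 1 < n"
  shows "braid_eq n (tau n j False @ [(j, False)])
    ([(j, False)] @ tau n j False @ tau n (j + 1) False @ tau n j True)"
proof -
  have T: "tau n j False \<in> braid_words n"
    using assms by (intro tau_valid) auto
  have "braid_eq n ([(j, False)] @ tau n j False @ tau n (j + 1) False @ tau n j True)
      (tau n j False @ tau n (j + 1) False @ [(j, False)] @ tau n j True)"
    using braid_eq.ctxt[OF braid_eq.sym[OF tau_pair_commute_letter[OF assms]], of "[]" "tau n j True"] by simp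
  also have "braid_eq n \<dots> (tau n j False @ [(j, False)] @ tau n j False @ tau n j True)"
    using braid_eq.ctxt[OF tau_succ_conj_letter[OF assms], of "tau n j False" "tau n j True"] by simp
  also have "braid_eq n \<dots> (tau n j False @ [(j, False)])"
    using braid_eq.ctxt[OF braid_eq_append_finv[OF T], of "tau n j False @ [(j, False)]" "[]"]
    by (simp add: finv_tau)
  finally show ?thesis by (rule braid_eq.sym)
qed

section \<open>The \<open>\<tau>\<close>'s generate a normal subgroup\<close>

lemma tau_pos_conj_letter_pos:
  assumes "1 \<le> j" "j < n" "1 \<le> i" "i + 1 < n"
  shows "\<exists>v \<in> braid_words n. braid_eq n (tau n j False @ [(i, False)]) ([(i, False)] @ tau_word n v)"
proof -
  consider "i = j" | "i + 1 = j" | "i + 2 \<le> j \<or> j + 1 \<le> i" by linarith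
  then show ?thesis
  proof cases
    case 1
    then show ?thesis using tau_conj_letter_same[of j n] assms
      by (intro bexI[of _ "[(j, False), (Suc j, False), (j, True)]"]) (simp_all add: tau_word_Cons)
  next
    case 2
    then show ?thesis using tau_succ_conj_letter[of i n] assms
      by (intro bexI[of _ "[(i, False)]"]) (simp_all add: tau_word_Cons)
  next
    case 3
    then show ?thesis using tau_commute_letter[of j n i False False] assms
      by (intro bexI[of _ "[(j, False)]"]) (simp_all add: tau_word_Cons)
  qed
qed

lemma tau_conj_letter_pos:
  assumes "1 \<le> j" "j < n" "1 \<le> i" "i + 1 < n"
  shows "\<exists>v \<in> braid_words n. braid_eq n (tau n j d @ [(i, False)]) ([(i, False)] @ tau_word n v)"
proof (cases d)
  case True
  obtain v where v: "v \<in> braid_words n"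
    "braid_eq n (tau n j False @ [(i, False)]) ([(i, False)] @ tau_word n v)"
    using tau_pos_conj_letter_pos[OF assms] by blast
  have "braid_eq n (finv (tau n j False) @ [(i, False)]) ([(i, False)] @ finv (tau_word n v))"
    using v assms by (intro braid_eq_conj_letter_finv tau_valid tau_word_valid) auto
  with v True show ?thesis
    by (intro bexI[of _ "finv v"]) (simp_all add: finv_tau finv_tau_word)
qed (use tau_pos_conj_letter_pos[OF assms] in simp)

lemma tau_succ_conj_inv_letter:
  assumes "1 \<le> i" "i + 1 < n"
  shows "braid_eq n (tau_word n [(i + 1, True), (i, False), (i + 1, False)] @ [(i, False)])
    ([(i, False)] @ tau n (i + 1) False)"
proof -
  let ?s = "(i, False)"
  let ?A = "tau n (Suc i) False" and ?B = "tau n i False"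
    and ?Ai = "tau n (Suc i) True" and ?Bi = "tau n i True"
  have f1: "braid_eq n (?A @ [?s]) ([?s] @ ?B)"
    using tau_succ_conj_letter[OF assms] by simp
  have f2: "braid_eq n (?B @ [?s]) ([?s] @ ?B @ ?A @ ?Bi)"
    using tau_conj_letter_same[OF assms] by simp
  have valid: "?A \<in> braid_words n" "?B \<in> braid_words n"
    using assms by (auto intro: tau_valid)
  have f3: "braid_eq n (?Ai @ [?s]) ([?s] @ ?Bi)"
    using braid_eq_conj_letter_finv[OF f1 valid] assms by (simp add: finv_tau)
  have c: "braid_eq n (?Bi @ ?B) []"
    using braid_eq_finv_append[OF valid(2)] by (simp add: finv_tau)
  have "tau_word n [(i + 1, True), (i, False), (i + 1, False)] @ [?s] = ?Ai @ ?B @ ?A @ [?s]"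
    by (simp add: tau_word_Cons)
  also have "braid_eq n \<dots> (?Ai @ ?B @ [?s] @ ?B)"
    using braid_eq.ctxt[OF f1, of "?Ai @ ?B" "[]"] by simp
  also have "braid_eq n \<dots> (?Ai @ [?s] @ ?B @ ?A @ ?Bi @ ?B)"
    using braid_eq.ctxt[OF f2, of ?Ai ?B] by simp
  also have "braid_eq n \<dots> ([?s] @ ?Bi @ ?B @ ?A @ ?Bi @ ?B)"
    using braid_eq.ctxt[OF f3, of "[]" "?B @ ?A @ ?Bi @ ?B"] by simp
  also have "braid_eq n \<dots> ([?s] @ ?A @ ?Bi @ ?B)"
    using braid_eq.ctxt[OF c, of "[?s]" "?A @ ?Bi @ ?B"] by simp
  also have "braid_eq n \<dots> ([?s] @ ?A)"
    using braid_eq.ctxt[OF c, of "[?s] @ ?A" "[]"] by simp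
  finally show ?thesis by simp
qed

lemma letter_pos_conj_tau_pos:
  assumes "1 \<le> j" "j < n" "1 \<le> i" "i + 1 < n"
  shows "\<exists>v \<in> braid_words n. braid_eq n (tau_word n v @ [(i, False)]) ([(i, False)] @ tau n j False)"
proof -
  consider "i = j" | "i + 1 = j" | "i + 2 \<le> j \<or> j + 1 \<le> i" by linarith
  then show ?thesis
  proof cases
    case 1
    then show ?thesis using tau_succ_conj_letter[of j n] assms
      by (intro bexI[of _ "[(Suc j, False)]"]) (simp_all add: tau_word_Cons)
  next
    case 2
    then show ?thesis using tau_succ_conj_inv_letter[of i n] assms
      by (intro bexI[of _ "[(i + 1, True), (i, False), (i + 1, False)]"]) simp_all
  next
    case 3
    then show ?thesis using tau_commute_letter[of j n i False False] assms
      by (intro bexI[of _ "[(j, False)]"]) (simp_all add: tau_word_Cons)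
  qed
qed

lemma tau_conj_letter_neg:
  assumes "1 \<le> j" "j < n" "1 \<le> i" "i + 1 < n"
  shows "\<exists>v \<in> braid_words n. braid_eq n (tau n j d @ [(i, True)]) ([(i, True)] @ tau_word n v)"
proof -
  have "\<exists>v \<in> braid_words n. braid_eq n (tau_word n v @ [(i, False)]) ([(i, False)] @ tau n j d)"
  proof (cases d)
    case True
    obtain v where v: "v \<in> braid_words n"
      "braid_eq n (tau_word n v @ [(i, False)]) ([(i, False)] @ tau n j False)"
      using letter_pos_conj_tau_pos[OF assms] by blast
    have "braid_eq n (finv (tau_word n v) @ [(i, False)]) ([(i, False)] @ finv (tau n j False))"
      using v assms by (intro braid_eq_conj_letter_finv tau_valid tau_word_valid) auto
    with v True show ?thesis
      by (intro bexI[of _ "finv v"]) (simp_all add: finv_tau finv_tau_word)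
  qed (use letter_pos_conj_tau_pos[OF assms] in simp)
  then obtain v where v: "v \<in> braid_words n"
    "braid_eq n (tau_word n v @ [(i, False)]) ([(i, False)] @ tau n j d)"
    by blast
  have "braid_eq n ([(i, True)] @ tau_word n v) (tau n j d @ [(i, True)])"
    using braid_eq_conj_inv_letter[OF v(2)] assms by simp
  with v(1) show ?thesis
    by (blast intro: braid_eq.sym)
qed

lemma tau_word_conj_letter:
  assumes "u \<in> braid_words n" "1 \<le> i" "i + 1 < n"
  shows "\<exists>u' \<in> braid_words n. braid_eq n (tau_word n u @ [(i, e)]) ([(i, e)] @ tau_word n u')"
  using assms(1)
proof (induction u)
  case Nil
  show ?case by (intro bexI[of _ "[]"]) simp_all
next
  case (Cons l u)
  then obtain u' where u': "u' \<in> braid_words n"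
    "braid_eq n (tau_word n u @ [(i, e)]) ([(i, e)] @ tau_word n u')"
    by auto
  obtain v where v: "v \<in> braid_words n"
    "braid_eq n (tau n (fst l) (snd l) @ [(i, e)]) ([(i, e)] @ tau_word n v)"
    using tau_conj_letter_pos[of "fst l" n i "snd l"] tau_conj_letter_neg[of "fst l" n i "snd l"]
      Cons.prems assms by (cases e) auto
  have "braid_eq n (tau_word n (l # u) @ [(i, e)]) (tau n (fst l) (snd l) @ [(i, e)] @ tau_word n u')"
    using braid_eq.ctxt[OF u'(2), of "tau n (fst l) (snd l)" "[]"] by (simp add: tau_word_Cons)
  also have "braid_eq n \<dots> ([(i, e)] @ tau_word n (v @ u'))"
    using braid_eq.ctxt[OF v(2), of "[]" "tau_word n u'"] by (simp add: tau_word_append)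
  finally show ?case
    using u' v by auto
qed

lemma braid_eq_tau_word_fred:
  assumes "u \<in> braid_words n"
  shows "braid_eq n (tau_word n u) (tau_word n (fred u))"
  using assms
proof (induction u)
  case (Cons x u)
  then have x: "1 \<le> fst x" "fst x < n" and u: "u \<in> braid_words n" "fred u \<in> braid_words n"
    using set_fred[of u] by (auto simp: braid_words_def)
  have "braid_eq n (tau_word n (x # u)) (tau n (fst x) (snd x) @ tau_word n (fred u))"
    using braid_eq_append[OF braid_eq_refl Cons.IH[OF u(1)]] by (simp add: tau_word_Cons)
  also have "braid_eq n \<dots> (tau_word n (cancel x (fred u)))"
  proof (cases "fred u")
    case (Cons y r)
    show ?thesis
    proof (cases "cancels x y")
      case True
      then have "tau n (fst y) (snd y) = finv (tau n (fst x) (snd x))"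
        by (auto simp: cancels_def finv_tau)
      with True Cons show ?thesis
        using braid_eq.ctxt[OF braid_eq_append_finv[OF tau_valid[OF x, of "snd x"]], of "[]" "tau_word n r"]
        by (simp add: tau_word_Cons cancel_Cons_eq)
    qed (use Cons in \<open>simp add: cancel_Cons_eq tau_word_Cons\<close>)
  qed (simp add: tau_word_Cons)
  finally show ?case by (simp add: fred_Cons)
qed (simp add: fred_def)

section \<open>Decomposition \<open>B\<^sub>n = B\<^bsub>n-1\<^esub> \<cdot> \<langle>\<tau>\<rangle> \<cdot> {coset representatives}\<close>\<close>

lemma desc_append_letter_cases:
  assumes "1 \<le> q" "q \<le> n" "1 \<le> i" "i < n"
  obtains s where "1 \<le> fst s" "fst s + 1 < n" "braid_eq n (desc q n @ [(i, e)]) ([s] @ desc q n)"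
  | v q' where "v \<in> braid_words n" "1 \<le> q'" "q' \<le> n"
      "braid_eq n (desc q n @ [(i, e)]) (tau_word n v @ desc q' n)"
proof -
  consider "i + 1 < q" | "i + 1 = q" "\<not> e" | "i + 1 = q" "e" | "i = q" "\<not> e" | "i = q" "e" | "q < i"
    by (cases e) linarith+
  then show thesis
  proof cases
    case 1
    then have "braid_eq n (desc q n @ [(i, e)]) ([(i, e)] @ desc q n)"
      using assms by (intro braid_eq_commute_far_word desc_valid) (auto simp: far_def dest!: set_desc)
    with 1 assms show thesis by (intro that(1)[of "(i, e)"]) auto
  next
    case 2
    then have "desc q n @ [(i, e)] = tau_word n [] @ desc i n"
      using assms desc_step[of i n] by simp
    with 2 assms that(2)[of "[]" i] show thesis by simp
  next
    case 3
    then have "braid_eq n (desc q n @ [(i, e)]) (tau_word n [(i, True)] @ desc i n)"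
      using desc_append_prev_inv[of i n] assms by (simp add: tau_word_Cons)
    with 3 assms show thesis by (intro that(2)[of "[(i, True)]" i]) auto
  next
    case 4
    then have "braid_eq n (desc q n @ [(i, e)]) (tau_word n [(q, False)] @ desc (q + 1) n)"
      using desc_append_letter[of q n] assms by (simp add: tau_word_Cons)
    with 4 assms show thesis by (intro that(2)[of "[(q, False)]" "q + 1"]) auto
  next
    case 5
    then have "braid_eq n (desc q n @ [(i, e)]) (tau_word n [] @ desc (q + 1) n)"
      using desc_append_letter_inv[of q n] assms by simp
    with 5 assms that(2)[of "[]" "q + 1"] show thesis by simp
  next
    case 6
    then have "braid_eq n (desc q n @ [(i, e)]) ([(i - 1, e)] @ desc q n)"
      using desc_conj_letter[of q i n e] assms by simp
    with 6 assms show thesis by (intro that(1)[of "(i - 1, e)"]) auto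
  qed
qed

lemma braid_decomposition:
  assumes "\<beta> \<in> braid_words n" "1 \<le> n"
  shows "\<exists>t u q. t \<in> braid_words (n - 1) \<and> u \<in> braid_words n \<and> 1 \<le> q \<and> q \<le> n \<and>
    braid_eq n \<beta> (t @ tau_word n u @ desc q n)"
  using assms(1)
proof (induction \<beta> rule: rev_induct)
  case Nil
  show ?case using assms(2) by (intro exI[of _ "[]"] exI[of _ n]) simp
next
  case (snoc s \<beta>)
  obtain i e where s: "s = (i, e)" by (cases s)
  with snoc.prems have i: "1 \<le> i" "i < n" and "\<beta> \<in> braid_words n" by auto
  then obtain t u q where tuq: "t \<in> braid_words (n - 1)" "u \<in> braid_words n" "1 \<le> q" "q \<le> n"
    and \<beta>: "braid_eq n \<beta> (t @ tau_word n u @ desc q n)"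
    using snoc.IH by blast
  have \<beta>s: "braid_eq n (\<beta> @ [s]) (t @ tau_word n u @ desc q n @ [(i, e)])"
    using braid_eq_append[OF \<beta> braid_eq_refl[of n "[s]"]] s by simp
  from tuq(3,4) i show ?case
  proof (cases rule: desc_append_letter_cases[where e = e])
    case (1 s')
    then obtain u' where u': "u' \<in> braid_words n"
      "braid_eq n (tau_word n u @ [s']) ([s'] @ tau_word n u')"
      using tau_word_conj_letter[OF tuq(2), of "fst s'" "snd s'"] by auto
    note \<beta>s
    also have "braid_eq n (t @ tau_word n u @ desc q n @ [(i, e)]) (t @ tau_word n u @ [s'] @ desc q n)"
      using braid_eq.ctxt[OF 1(3), of "t @ tau_word n u" "[]"] by simp
    also have "braid_eq n \<dots> ((t @ [s']) @ tau_word n u' @ desc q n)"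
      using braid_eq.ctxt[OF u'(2), of t "desc q n"] by simp
    finally have "braid_eq n (\<beta> @ [s]) ((t @ [s']) @ tau_word n u' @ desc q n)" .
    moreover have "t @ [s'] \<in> braid_words (n - 1)"
      using tuq(1) 1 by auto
    ultimately show ?thesis
      using u'(1) tuq by blast
  next
    case (2 v q')
    have "braid_eq n (t @ tau_word n u @ desc q n @ [(i, e)]) (t @ tau_word n (u @ v) @ desc q' n)"
      using braid_eq.ctxt[OF 2(4), of "t @ tau_word n u" "[]"] by (simp add: tau_word_append)
    with \<beta>s have "braid_eq n (\<beta> @ [s]) (t @ tau_word n (u @ v) @ desc q' n)"
      by (rule braid_eq.trans)
    with tuq 2 show ?thesis
      by (intro exI[of _ t] exI[of _ "u @ v"] exI[of _ q']) simp
  qed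
qed

lemma in_Bk_Bnk_self: "\<beta> \<in> braid_words n \<Longrightarrow> in_Bk_Bnk n n \<beta>"
  unfolding in_Bk_Bnk_def by (intro bexI[of _ \<beta>]) (auto simp: braid_words_def)

lemma hur_append_tail: "w \<in> braid_words (length xs) \<Longrightarrow> hur w (xs @ ys) = hur w xs @ ys"
proof (induction w)
  case (Cons s w)
  then show ?case
    by (cases s, cases "snd s") (auto simp: list_update_append nth_append)
qed simp

lemma hur_last:
  assumes "t \<in> braid_words (n - 1)" "length y = n" "1 \<le> n"
  shows "hur t y ! (n - 1) = y ! (n - 1)"
proof -
  have "y \<noteq> []"
    using assms by auto
  then have "y = butlast y @ [last y]"
    by simp
  also have "last y = y ! (n - 1)"
    using \<open>y \<noteq> []\<close> assms by (simp add: last_conv_nth)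
  finally have y: "y = butlast y @ [y ! (n - 1)]" .
  then have "hur t y = hur t (butlast y) @ [y ! (n - 1)]"
    using hur_append_tail[of t "butlast y" "[y ! (n - 1)]"] assms by simp
  then show ?thesis
    using assms by (simp add: nth_append)
qed

lemma block_form_hur_append:
  assumes "block_form n k (hur \<beta> (basis n))" "\<beta> \<in> braid_words n" "k \<le> n"
    and "w \<in> braid_words n" "\<forall>l\<in>set w. fst l \<noteq> k"
  shows "block_form n k (hur (\<beta> @ w) (basis n))"
proof -
  have "hur (\<beta> @ w) (basis n) = map (subst (hur w (basis n))) (hur \<beta> (basis n))"
    using hur_eq_map_subst[OF assms(2), of "hur w (basis n)"] by (simp add: hur_append)
  moreover have "block_form n k (hur w (basis n))"
    using assms(3-5) by (intro block_form_hur block_form_basis) auto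
  ultimately show ?thesis
    using block_form_map_subst assms(1,3) by simp
qed

lemma block_form_last:
  assumes "block_form n k x" "k < n"
  shows "support (x ! (n - 1)) \<subseteq> {k+1..n}"
proof -
  have "support (x ! (n - 1)) \<subseteq> block n k (n - 1)"
    using assms unfolding block_form_def by simp
  moreover have "\<not> n - 1 < k"
    using assms(2) by simp
  ultimately show ?thesis by (simp add: block_def)
qed

text \<open>The last entry of \<open>(t \<cdot> \<tau>(u) \<cdot> desc q n) \<cdot> f\<close> is a conjugate of \<open>f\<^sub>q\<close>.\<close>

lemma coset_index_gt:
  assumes "block_form n k (hur (t @ tau_word n u @ desc q n) (basis n))" "k < n"
    and "t \<in> braid_words (n - 1)" "u \<in> braid_words n" "1 \<le> q" "q \<le> n"
  shows "k < q"
proof -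
  define Y where "Y = hur (desc q n) (basis n)"
  have "length Y = n" "Y ! (n - 1) = gen q"
    using hur_desc_last[of q n "basis n"] assms by (simp_all add: Y_def)
  obtain W where W: "hur (tau_word n u) (basis n) ! (n - 1) = W + gen n - W"
    using hur_tau_word_basis_last[OF _ assms(4)] assms(2) by auto
  have "hur (t @ tau_word n u @ desc q n) (basis n) ! (n - 1) = hur (tau_word n u) Y ! (n - 1)"
    using hur_last[OF assms(3)] \<open>length Y = n\<close> assms(2) by (simp add: hur_append Y_def)
  also have "\<dots> = subst Y W + gen q - subst Y W"
    using hur_eq_map_subst[OF tau_word_valid[OF assms(4)] \<open>length Y = n\<close>] W \<open>Y ! (n - 1) = gen q\<close> assms(2)
    by simp
  finally show ?thesis
    using block_form_last[OF assms(1,2)] gen_in_support_conj[of q "subst Y W"] by auto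
qed

lemma tau_word_letters_gt:
  assumes "block_form n k (hur (t @ tau_word n u) (basis n))" "k < n"
    and "t \<in> braid_words (n - 1)" "u \<in> braid_words n"
  shows "fst ` set (fred u) \<subseteq> {k+1..n}"
proof -
  obtain W where W: "support W \<subseteq> {1..n}" "hur (tau_word n u) (basis n) ! (n - 1) = W + gen n - W"
    "subst (killed_basis n) W = subst_word (basis n) u"
    using hur_tau_word_basis_last[OF _ assms(4)] assms(2) by auto
  have "hur (t @ tau_word n u) (basis n) ! (n - 1) = W + gen n - W"
    using hur_last[OF assms(3)] W(2) assms(2) by (simp add: hur_append)
  then have "support (subst (killed_basis n) W) \<subseteq> {k+1..n}"
    using support_subst_killed_basis[OF W(1)] block_form_last[OF assms(1,2)] assms(2) by auto
  moreover have "support (subst_word (basis n) u) = fst ` set (fred u)"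
    using assms(4) by (simp add: support_def word_of_subst_word_basis braid_words_def less_imp_le)
  ultimately show ?thesis
    using W(3) by simp
qed

lemma tau_word_letters_ge:
  assumes "l \<in> set (tau_word n u)"
  shows "\<exists>x\<in>set u. fst x \<le> fst l"
proof -
  obtain x where x: "x \<in> set u" "l \<in> set (tau n (fst x) (snd x))"
    using assms by (auto simp: tau_word_def)
  then have "fst x \<le> fst l"
    by (auto simp: tau_def dest!: set_desc set_desc_inv)
  with x show ?thesis by blast
qed

lemma block_form_restrict:
  assumes "block_form (Suc m) k (hur t (basis (Suc m)))" "t \<in> braid_words m" "k \<le> m"
  shows "block_form m k (hur t (basis m))"
  unfolding block_form_def
proof (intro allI impI)
  fix j assume "j < m"
  have "hur t (basis (Suc m)) = hur t (basis m) @ [gen (Suc m)]"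
    using hur_append_tail[of t "basis m" "[gen (Suc m)]"] assms(2) by (simp add: basis_Suc)
  then have "hur t (basis (Suc m)) ! j = hur t (basis m) ! j"
    using \<open>j < m\<close> by (simp add: nth_append)
  then have "support (hur t (basis m) ! j) \<subseteq> block (Suc m) k j"
    using assms(1) \<open>j < m\<close> unfolding block_form_def by (metis less_SucI)
  moreover have "support (hur t (basis m) ! j) \<subseteq> {1..m}"
    using support_hur_basis[OF assms(2) \<open>j < m\<close>] .
  moreover have "block (Suc m) k j \<inter> {1..m} \<subseteq> block m k j"
    using assms(3) by (auto simp: block_def)
  ultimately show "support (hur t (basis m) ! j) \<subseteq> block m k j"
    by blast
qed

lemma block_form_braid_eq_append:
  assumes "block_form n k (hur \<beta> (basis n))" "braid_eq n (\<beta> @ w) \<beta>'" "k \<le> n"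
    and "\<beta> \<in> braid_words n" "w \<in> braid_words n" "\<beta>' \<in> braid_words n" "\<forall>l\<in>set w. fst l \<noteq> k"
  shows "block_form n k (hur \<beta>' (basis n))"
  using block_form_hur_append[OF assms(1,4,3,5,7)] hur_braid_eq[OF assms(2) _ assms(6)] assms(4,5)
  by simp

lemma block_form_drop_coset:
  assumes "block_form n k (hur \<beta> (basis n))" "\<beta> \<in> braid_words n" "k < n"
    and "t \<in> braid_words (n - 1)" "u \<in> braid_words n" "1 \<le> q" "q \<le> n"
    and "braid_eq n \<beta> (t @ tau_word n u @ desc q n)"
  shows "k < q" and "block_form n k (hur (t @ tau_word n u) (basis n))"
proof -
  have valid: "t @ tau_word n u \<in> braid_words n" "desc q n \<in> braid_words n"
    using braid_words_mono[OF assms(4)] tau_word_valid[OF assms(5)] desc_valid[OF assms(6)] by auto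
  then have "block_form n k (hur (t @ tau_word n u @ desc q n) (basis n))"
    using assms(1) hur_braid_eq[OF assms(8,2)] by simp
  then show "k < q"
    using coset_index_gt assms(3-7) by blast
  then have C_k: "\<forall>l\<in>set (finv (desc q n)). fst l \<noteq> k"
    by (auto simp: finv_desc dest: set_desc_inv)
  have "braid_eq n (\<beta> @ finv (desc q n)) ((t @ tau_word n u) @ desc q n @ finv (desc q n))"
    using braid_eq_append[OF assms(8) braid_eq_refl] by simp
  also have "braid_eq n \<dots> (t @ tau_word n u)"
    using braid_eq.ctxt[OF braid_eq_append_finv[OF valid(2)], of "t @ tau_word n u" "[]"] by simp
  finally show "block_form n k (hur (t @ tau_word n u) (basis n))"
    using block_form_braid_eq_append[OF assms(1) _ _ assms(2) _ valid(1) C_k] assms(3) valid(2) by simp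
qed

lemma block_form_drop_tau_word:
  assumes "block_form n k (hur (t @ tau_word n u) (basis n))" "k < n"
    and "t \<in> braid_words (n - 1)" "u \<in> braid_words n"
  shows "block_form n k (hur t (basis n))" and "\<forall>l\<in>set (tau_word n (fred u)). fst l \<noteq> k"
proof -
  define V where "V = tau_word n (fred u)"
  have "fred u \<in> braid_words n"
    using assms(4) set_fred[of u] by (auto simp: braid_words_def)
  then have valid: "t \<in> braid_words n" "tau_word n u \<in> braid_words n" "V \<in> braid_words n"
    using braid_words_mono[OF assms(3)] assms(4) by (simp_all add: V_def tau_word_valid)
  have "fst ` set (fred u) \<subseteq> {k+1..n}"
    using tau_word_letters_gt[OF assms] .
  then show V_k: "\<forall>l\<in>set V. fst l \<noteq> k"
    by (force simp: V_def dest: tau_word_letters_ge)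
  then have V_k': "\<forall>l\<in>set (finv V). fst l \<noteq> k"
    by (auto simp: finv_def)
  have "braid_eq n ((t @ tau_word n u) @ finv V) (t @ V @ finv V)"
    using braid_eq.ctxt[OF braid_eq_tau_word_fred[OF assms(4)], of t "finv V"] by (simp add: V_def)
  also have "braid_eq n \<dots> t"
    using braid_eq.ctxt[OF braid_eq_append_finv[OF valid(3)], of t "[]"] by simp
  finally show "block_form n k (hur t (basis n))"
    using block_form_braid_eq_append[OF assms(1) _ _ _ _ valid(1) V_k'] assms(2) valid by simp
qed

lemma in_Bk_Bnk_if_block_form:
  "k \<le> n \<Longrightarrow> \<beta> \<in> braid_words n \<Longrightarrow> block_form n k (hur \<beta> (basis n)) \<Longrightarrow> in_Bk_Bnk n k \<beta>"
proof (induction n arbitrary: k \<beta>)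
  case (Suc m)
  let ?n = "Suc m"
  show ?case
  proof (cases "k = ?n")
    case False
    with Suc.prems have "k \<le> m" "k < ?n" by auto
    obtain t u q where t: "t \<in> braid_words m" and u: "u \<in> braid_words ?n" and q: "1 \<le> q" "q \<le> ?n"
      and \<beta>: "braid_eq ?n \<beta> (t @ tau_word ?n u @ desc q ?n)"
      using braid_decomposition[OF Suc.prems(2)] by auto
    have t': "t \<in> braid_words (?n - 1)"
      using t by simp
    note coset = block_form_drop_coset[OF Suc.prems(3,2) \<open>k < ?n\<close> t' u q \<beta>]
    note tau = block_form_drop_tau_word[OF coset(2) \<open>k < ?n\<close> t' u]
    have "block_form m k (hur t (basis m))"
      using block_form_restrict tau(1) t \<open>k \<le> m\<close> by simp
    then obtain w where w: "w \<in> braid_words m" "\<forall>l\<in>set w. fst l \<noteq> k" "braid_eq m t w"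
      using Suc.IH[OF \<open>k \<le> m\<close> t] unfolding in_Bk_Bnk_def by blast
    let ?V = "tau_word ?n (fred u)"
    have "braid_eq ?n \<beta> (w @ ?V @ desc q ?n)"
      using \<beta> braid_eq_append[OF braid_eq_mono[OF w(3)] braid_eq_append[OF braid_eq_tau_word_fred[OF u] braid_eq_refl]]
      by (auto intro: braid_eq.trans)
    moreover have "fred u \<in> braid_words ?n"
      using u set_fred[of u] by (auto simp: braid_words_def)
    then have "w @ ?V @ desc q ?n \<in> braid_words ?n"
      using braid_words_mono[OF w(1)] q by (simp add: tau_word_valid desc_valid)
    moreover have "\<forall>l\<in>set (w @ ?V @ desc q ?n). fst l \<noteq> k"
      using w(2) tau(2) coset(1) by (auto dest: set_desc)
    ultimately show ?thesis
      unfolding in_Bk_Bnk_def by blast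
  qed (use in_Bk_Bnk_self Suc.prems in simp)
qed (use in_Bk_Bnk_self in simp)

lemma word_of_in_gen_sub_iff: "word_of g \<in> gen_sub L \<longleftrightarrow> support g \<subseteq> L"
proof
  assume "word_of g \<in> gen_sub L"
  then obtain w where "word_of g = fred w" "\<forall>l\<in>set w. fst l \<in> L"
    by (auto simp: gen_sub_def)
  then show "support g \<subseteq> L"
    using set_fred[of w] by (auto simp: support_def)
next
  assume "support g \<subseteq> L"
  then show "word_of g \<in> gen_sub L"
    unfolding gen_sub_def support_def by (auto intro!: exI[of _ "word_of g"] simp: fred_reduced)
qed

lemma block_form_iff:
  assumes "k \<le> n"
  shows "block_form n k x \<longleftrightarrow>
    (\<forall>j < k. support (x ! j) \<subseteq> {1..k}) \<and> (\<forall>j. k \<le> j \<and> j < n \<longrightarrow> support (x ! j) \<subseteq> {k+1..n})"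
proof
  assume "block_form n k x"
  then have block: "support (x ! j) \<subseteq> block n k j" if "j < n" for j
    using that by (simp add: block_form_def)
  have "support (x ! j) \<subseteq> {1..k}" if "j < k" for j
    using block[of j] that assms by (simp add: block_def)
  moreover have "support (x ! j) \<subseteq> {k+1..n}" if "k \<le> j" "j < n" for j
    using block[of j] that by (simp add: block_def)
  ultimately show "(\<forall>j < k. support (x ! j) \<subseteq> {1..k}) \<and>
      (\<forall>j. k \<le> j \<and> j < n \<longrightarrow> support (x ! j) \<subseteq> {k+1..n})"
    by blast
next
  assume "(\<forall>j < k. support (x ! j) \<subseteq> {1..k}) \<and>
      (\<forall>j. k \<le> j \<and> j < n \<longrightarrow> support (x ! j) \<subseteq> {k+1..n})"
  then show "block_form n k x"
    by (simp add: block_form_def block_def)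
qed

theorem lemma5p1:
  fixes n k :: nat and \<beta> :: "letter list"
  assumes "k \<le> n" and "\<beta> \<in> braid_words n"
  shows "in_Bk_Bnk n k \<beta> \<longleftrightarrow>
    ((\<forall>j < k. hurwitz \<beta> (free_basis n) ! j \<in> gen_sub {1..k}) \<and>
     (\<forall>j. k \<le> j \<and> j < n \<longrightarrow> hurwitz \<beta> (free_basis n) ! j \<in> gen_sub {k+1..n}))"
proof -
  have "hurwitz \<beta> (free_basis n) = map word_of (hur \<beta> (basis n))"
    using hurwitz_word_of[of \<beta> "basis n"] assms(2) by (simp add: free_basis_eq)
  then have "hurwitz \<beta> (free_basis n) ! j \<in> gen_sub L \<longleftrightarrow> support (hur \<beta> (basis n) ! j) \<subseteq> L"
    if "j < n" for j L
    using that by (simp add: word_of_in_gen_sub_iff)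
  then have "((\<forall>j < k. hurwitz \<beta> (free_basis n) ! j \<in> gen_sub {1..k}) \<and>
      (\<forall>j. k \<le> j \<and> j < n \<longrightarrow> hurwitz \<beta> (free_basis n) ! j \<in> gen_sub {k+1..n}))
      \<longleftrightarrow> block_form n k (hur \<beta> (basis n))"
    using assms(1) by (auto simp: block_form_iff)
  then show ?thesis
    using block_form_if_in_Bk_Bnk in_Bk_Bnk_if_block_form assms by blast
qed

end
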